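(* Let $\mathbf{X}=(\mathbf{X}_0',\dots,\mathbf{X}_k')'$ have a matrix variate spherical distribution with density generator $h$, $\mathbf{X}_i\in\mathbb{R}^{n_i\times m}$, $n_i\ge m\ge1$, $i=0,\dots,k$, $N=n_0+\cdots+n_k$. Let $V=\|\mathbf{X}_0\|^2$ and $\mathbf{R}_i=(V+\|\mathbf{X}_i\|^2)^{-1/2}\mathbf{X}_i$, $i=1,\dots,k$ (so $\|\mathbf{R}_i\|^2<1$). Then: (a) the joint density of $(V,\mathbf{R}_1,\dots,\mathbf{R}_k)$ on $\{v>0,\ \|\mathbf{R}_i\|^2<1\ \forall i\}$ with respect to $(dv)\bigwedge_{i=1}^k(d\mathbf{R}_i)$ is $$\frac{\pi^{n_0m/2}}{\Gamma[n_0m/2]}\,v^{Nm/2-1}\,h\Big[v\Big(1+\sum_{i=1}^k\frac{\|\mathbf{R}_i\|^2}{1-\|\mathbf{R}_i\|^2}\Big)\Big]\prod_{i=1}^k(1-\|\mathbf{R}_i\|^2)^{-n_im/2-1};$$ (b) the marginal density of $(\mathbf{R}_1,\dots,\mathbf{R}_k)$ with respect to $\bigwedge_{i=1}^k(d\mathbf{R}_i)$ is $$\frac{\Gamma[Nm/2]}{\pi^{(N-n_0)m/2}\Gamma[n_0m/2]}\Big[1+\sum_{i=1}^k\frac{\|\mathbf{R}_i\|^2}{1-\|\mathbf{R}_i\|^2}\Big]^{-Nm/2}\prod_{i=1}^k(1-\|\mathbf{R}_i\|^2)^{-n_im/2-1}.$$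
   Context: Standing setting: $\mathbf{X}\in\mathbb{R}^{N\times m}$ has a matrix variate spherical distribution with density generator $h$ if it has density $h(\operatorname{tr}\mathbf{X}'\mathbf{X})$ with respect to Lebesgue measure $(d\mathbf{X})$ on $\mathbb{R}^{N\times m}$, where $h:[0,\infty)\to[0,\infty)$ is measurable with $\int_{\mathbb{R}^{N\times m}}h(\operatorname{tr}\mathbf{X}'\mathbf{X})(d\mathbf{X})=1$. $\|\mathbf{A}\|=\sqrt{\operatorname{tr}\mathbf{A}'\mathbf{A}}$ is the Frobenius norm; $(d\mathbf{A})$ is Lebesgue measure on the entries of $\mathbf{A}$. $\Gamma[\cdot]$ is the Gamma function. *)

theory Defs
  imports "HOL-Probability.Probability"
begin

text \<open>A matrix in R^(N x m) is represented as an extensional function on the index set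
  {..<N} x {..<m}; Lebesgue measure (dX) is the product of Lebesgue measures on the entries.\<close>

definition mat_idx :: "nat \<Rightarrow> nat \<Rightarrow> (nat \<times> nat) set" where
  "mat_idx N m = {..<N} \<times> {..<m}"

definition mat_lebesgue :: "nat \<Rightarrow> nat \<Rightarrow> ((nat \<times> nat) \<Rightarrow> real) measure" where
  "mat_lebesgue N m = PiM (mat_idx N m) (\<lambda>_. lborel)"

definition frob_sq :: "nat \<Rightarrow> nat \<Rightarrow> ((nat \<times> nat) \<Rightarrow> real) \<Rightarrow> real" where
  "frob_sq N m X = (\<Sum>ij\<in>mat_idx N m. (X ij)\<^sup>2)"

definition spherical_dist :: "nat \<Rightarrow> nat \<Rightarrow> (real \<Rightarrow> real) \<Rightarrow> ((nat \<times> nat) \<Rightarrow> real) measure" where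
  "spherical_dist N m h = density (mat_lebesgue N m) (\<lambda>X. ennreal (h (frob_sq N m X)))"

text \<open>Row blocks: block i consists of rows row_off n i, ..., row_off n i + n i - 1.\<close>
definition row_off :: "(nat \<Rightarrow> nat) \<Rightarrow> nat \<Rightarrow> nat" where
  "row_off n i = (\<Sum>j<i. n j)"

definition blk_sq :: "(nat \<Rightarrow> nat) \<Rightarrow> nat \<Rightarrow> nat \<Rightarrow> ((nat \<times> nat) \<Rightarrow> real) \<Rightarrow> real" where
  "blk_sq n m i X = (\<Sum>r<n i. \<Sum>c<m. (X (row_off n i + r, c))\<^sup>2)"

text \<open>Index set of the tuple (R_1,...,R_k): entry (i,r,c) is entry (r,c) of R_i.\<close>
definition R_idx :: "nat \<Rightarrow> (nat \<Rightarrow> nat) \<Rightarrow> nat \<Rightarrow> (nat \<times> nat \<times> nat) set" where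
  "R_idx k n m = {(i, r, c). i \<in> {1..k} \<and> r < n i \<and> c < m}"

definition R_lebesgue :: "nat \<Rightarrow> (nat \<Rightarrow> nat) \<Rightarrow> nat \<Rightarrow> ((nat \<times> nat \<times> nat) \<Rightarrow> real) measure" where
  "R_lebesgue k n m = PiM (R_idx k n m) (\<lambda>_. lborel)"

definition V_stat :: "(nat \<Rightarrow> nat) \<Rightarrow> nat \<Rightarrow> ((nat \<times> nat) \<Rightarrow> real) \<Rightarrow> real" where
  "V_stat n m X = blk_sq n m 0 X"

definition R_stat :: "nat \<Rightarrow> (nat \<Rightarrow> nat) \<Rightarrow> nat \<Rightarrow> ((nat \<times> nat) \<Rightarrow> real) \<Rightarrow> ((nat \<times> nat \<times> nat) \<Rightarrow> real)" where
  "R_stat k n m X = restrict (\<lambda>(i, r, c). X (row_off n i + r, c) / sqrt (V_stat n m X + blk_sq n m i X))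
                       (R_idx k n m)"

definition R_sq :: "(nat \<Rightarrow> nat) \<Rightarrow> nat \<Rightarrow> ((nat \<times> nat \<times> nat) \<Rightarrow> real) \<Rightarrow> nat \<Rightarrow> real" where
  "R_sq n m R i = (\<Sum>r<n i. \<Sum>c<m. (R (i, r, c))\<^sup>2)"

end

theory Submission
  imports Defs
begin

text \<open>
  In polar coordinates Lebesgue measure on \<real>^d is the product of a finite measure on directions
  and the law of |x|^2, which has density (\<pi>^(d/2) / \<Gamma>(d/2)) u^(d/2 - 1) on (0, \<infinity>).
  Fix V = v > 0. On each block X_i the map x \<mapsto> x / sqrt (v + |x|^2) is a bijection onto the open
  unit ball, and along a ray it is the substitution |x|^2 = v r / (1 - r), whose Jacobian is
  v^(d/2) (1 - r)^(-d/2 - 1). Since the blocks only interact through h, Fubini lets us transform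
  them one at a time, and |X|^2 = v (1 + \<Sigma> r_i / (1 - r_i)). Integrating out X_0 radially gives (a);
  integrating out v and using the normalisation of h, itself computed radially, gives (b).
\<close>

section \<open>Polar coordinates on \<real>^I\<close>

abbreviation lborel_pi :: "'i set \<Rightarrow> ('i \<Rightarrow> real) measure" where
  "lborel_pi I \<equiv> PiM I (\<lambda>_. lborel)"

interpretation lborel_prod: product_sigma_finite "\<lambda>_::'i. lborel :: real measure" ..

definition sqnorm :: "'i set \<Rightarrow> ('i \<Rightarrow> real) \<Rightarrow> real" where
  "sqnorm I x = (\<Sum>j\<in>I. (x j)\<^sup>2)"

definition dilate :: "'i set \<Rightarrow> real \<Rightarrow> ('i \<Rightarrow> real) \<Rightarrow> ('i \<Rightarrow> real)" where
  "dilate I a x = restrict (\<lambda>j. a * x j) I"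

definition direction :: "'i set \<Rightarrow> ('i \<Rightarrow> real) \<Rightarrow> ('i \<Rightarrow> real)" where
  "direction I x = restrict (\<lambda>j. x j / sqrt (sqnorm I x)) I"

lemma sqnorm_measurable[measurable]: "finite I \<Longrightarrow> sqnorm I \<in> borel_measurable (lborel_pi I)"
  unfolding sqnorm_def by measurable

lemma dilate_measurable[measurable]: "dilate I a \<in> measurable (lborel_pi I) (lborel_pi I)"
  unfolding dilate_def by measurable

lemma dilate_sqrt_measurable[measurable]:
  "finite I \<Longrightarrow> (\<lambda>(u, w). dilate I (sqrt u) w) \<in> measurable (borel \<Otimes>\<^sub>M lborel_pi I) (lborel_pi I)"
  unfolding dilate_def by measurable

lemma dilate_measurable_factor[measurable]:
  "(\<lambda>u. dilate I (f u) w) \<in> measurable borel (lborel_pi I)" if "f \<in> borel_measurable borel"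
  unfolding dilate_def using that by measurable

lemma direction_measurable[measurable]: "finite I \<Longrightarrow> direction I \<in> measurable (lborel_pi I) (lborel_pi I)"
  unfolding direction_def by measurable

lemma sqnorm_nonneg: "0 \<le> sqnorm I x"
  unfolding sqnorm_def by (intro sum_nonneg) auto

lemma sqnorm_dilate: "sqnorm I (dilate I a x) = a\<^sup>2 * sqnorm I x"
  unfolding sqnorm_def dilate_def by (simp add: sum_distrib_left power_mult_distrib)

lemma dilate_in_space: "x \<in> space (lborel_pi I) \<Longrightarrow> dilate I c x \<in> space (lborel_pi I)"
  by (auto simp: dilate_def space_PiM)

lemma direction_dilate: "c > 0 \<Longrightarrow> direction I (dilate I c x) = direction I x"
  unfolding direction_def sqnorm_dilate by (auto simp: dilate_def real_sqrt_mult fun_eq_iff)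

lemma sqnorm_direction: "sqnorm I x \<noteq> 0 \<Longrightarrow> sqnorm I (direction I x) = 1"
  using sqnorm_nonneg[of I x]
  by (simp add: sqnorm_def direction_def power_divide sum_divide_distrib[symmetric])

lemma dilate_direction:
  "x \<in> space (lborel_pi I) \<Longrightarrow> sqnorm I x \<noteq> 0 \<Longrightarrow> dilate I (sqrt (sqnorm I x)) (direction I x) = x"
  using sqnorm_nonneg[of I x]
  by (auto simp: dilate_def direction_def space_PiM PiE_iff extensional_def fun_eq_iff)

lemma density_distr_dilate:
  fixes I :: "'i set"
  assumes I: "finite I" and a: "a > 0"
  shows "density (distr (lborel_pi I) (lborel_pi I) (dilate I a)) (\<lambda>_. ennreal (a ^ card I)) = lborel_pi I"
proof (rule lborel_prod.PiM_eqI[OF I])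
  fix A :: "'i \<Rightarrow> real set" assume A: "\<And>i. i \<in> I \<Longrightarrow> A i \<in> sets lborel"
  have line: "emeasure lborel ((\<lambda>x. a * x) -` A i) = ennreal (1/a) * emeasure lborel (A i)" if "i \<in> I" for i
  proof -
    have "emeasure lborel ((\<lambda>x. a * x) -` A i) = emeasure (distr lborel borel ((*) a)) (A i)"
      using A[OF that] by (subst emeasure_distr) auto
    also have "\<dots> = ennreal (1/a) * emeasure lborel (A i)"
      using A[OF that] a by (simp add: lborel_distr_mult emeasure_density_const divide_inverse)
    finally show ?thesis .
  qed
  have "dilate I a -` Pi\<^sub>E I A \<inter> space (lborel_pi I) = Pi\<^sub>E I (\<lambda>i. (\<lambda>x. a * x) -` A i)"
    using a by (auto simp: dilate_def space_PiM PiE_iff extensional_def)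
  moreover have "(\<lambda>x. a * x) -` A i \<in> sets lborel" if "i \<in> I" for i
    using measurable_sets[of "\<lambda>x::real. a * x" borel borel "A i"] A[OF that] by simp
  ultimately have "emeasure (density (distr (lborel_pi I) (lborel_pi I) (dilate I a)) (\<lambda>_. ennreal (a ^ card I))) (Pi\<^sub>E I A)
      = ennreal (a ^ card I) * (\<Prod>i\<in>I. ennreal (1/a) * emeasure lborel (A i))"
    using A I by (simp add: emeasure_density_const emeasure_distr sets_PiM_I_finite lborel_prod.emeasure_PiM line)
  also have "\<dots> = (\<Prod>i\<in>I. emeasure lborel (A i))"
    using a by (simp add: prod.distrib ennreal_power[symmetric] ennreal_mult[symmetric]
        mult.assoc[symmetric] power_mult_distrib[symmetric])
  finally show "emeasure (density (distr (lborel_pi I) (lborel_pi I) (dilate I a)) (\<lambda>_. ennreal (a ^ card I))) (Pi\<^sub>E I A)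
      = (\<Prod>i\<in>I. emeasure lborel (A i))" .
qed simp_all

lemma emeasure_dilate_vimage:
  fixes I :: "'i set"
  assumes I: "finite I" and a: "a > 0" and S: "S \<in> sets (lborel_pi I)"
  shows "emeasure (lborel_pi I) (dilate I a -` S \<inter> space (lborel_pi I))
       = ennreal ((1/a) ^ card I) * emeasure (lborel_pi I) S"
proof -
  have "emeasure (lborel_pi I) S = ennreal (a ^ card I) * emeasure (lborel_pi I) (dilate I a -` S \<inter> space (lborel_pi I))"
    using S by (subst density_distr_dilate[OF I a, symmetric]) (simp add: emeasure_density_const emeasure_distr)
  then have "ennreal ((1/a) ^ card I) * emeasure (lborel_pi I) S
      = ennreal ((1/a) ^ card I * a ^ card I) * emeasure (lborel_pi I) (dilate I a -` S \<inter> space (lborel_pi I))"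
    using a by (simp add: ennreal_mult mult.assoc)
  also have "(1/a) ^ card I * a ^ card I = 1"
    using a by (simp add: power_mult_distrib[symmetric])
  finally show ?thesis by simp
qed

lemma emeasure_sqnorm_le:
  fixes I :: "'i set"
  assumes I: "finite I" and t: "0 \<le> t"
  shows "emeasure (lborel_pi I) {x \<in> space (lborel_pi I). sqnorm I x \<le> t} \<le> ennreal ((2 * sqrt t) ^ card I)"
proof -
  have "x j \<in> {- sqrt t .. sqrt t}" if "sqnorm I x \<le> t" "j \<in> I" for x j
  proof -
    have "(x j)\<^sup>2 \<le> sqnorm I x"
      unfolding sqnorm_def using I that by (intro member_le_sum) auto
    then have "(x j)\<^sup>2 \<le> t" using that by linarith
    from real_sqrt_le_mono[OF this] show ?thesis by (simp add: abs_le_iff)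
  qed
  then have "{x \<in> space (lborel_pi I). sqnorm I x \<le> t} \<subseteq> Pi\<^sub>E I (\<lambda>_. {- sqrt t .. sqrt t})"
    by (auto simp: space_PiM PiE_iff extensional_def)
  then have "emeasure (lborel_pi I) {x \<in> space (lborel_pi I). sqnorm I x \<le> t}
      \<le> emeasure (lborel_pi I) (Pi\<^sub>E I (\<lambda>_. {- sqrt t .. sqrt t}))"
    by (intro emeasure_mono) (auto intro!: sets_PiM_I_finite I)
  also have "\<dots> = ennreal ((2 * sqrt t) ^ card I)"
    using I t by (simp add: lborel_prod.emeasure_PiM emeasure_lborel_Icc_eq ennreal_power)
  finally show ?thesis .
qed

lemma emeasure_sqnorm_le_1_finite:
  "finite I \<Longrightarrow> emeasure (lborel_pi I) {x \<in> space (lborel_pi I). sqnorm I x \<le> 1} < \<infinity>"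
  by (rule order.strict_trans1[OF emeasure_sqnorm_le]) simp_all

lemma AE_sqnorm_nonzero:
  fixes I :: "'i set"
  assumes I: "finite I" "I \<noteq> {}"
  shows "AE x in lborel_pi I. sqnorm I x \<noteq> 0"
proof (rule AE_I')
  have "emeasure (lborel_pi I) {x \<in> space (lborel_pi I). sqnorm I x \<le> 0} = 0"
    using emeasure_sqnorm_le[OF I(1) order.refl] I by (simp add: power_0_left card_eq_0_iff)
  then show "{x \<in> space (lborel_pi I). sqnorm I x \<le> 0} \<in> null_sets (lborel_pi I)"
    using I by (auto simp: null_sets_def)
qed auto

definition dilation_invariant :: "'i set \<Rightarrow> ('i \<Rightarrow> real) set \<Rightarrow> bool" where
  "dilation_invariant I C \<longleftrightarrow> C \<subseteq> space (lborel_pi I)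
     \<and> (\<forall>c>0. \<forall>x\<in>space (lborel_pi I). dilate I c x \<in> C \<longleftrightarrow> x \<in> C)"

lemma emeasure_dilation_invariant_sqnorm_le:
  fixes I :: "'i set"
  assumes I: "finite I" "I \<noteq> {}" and C: "dilation_invariant I C" "C \<in> sets (lborel_pi I)"
    and t: "t \<ge> 0"
  shows "emeasure (lborel_pi I) (C \<inter> {x. sqnorm I x \<le> t})
       = ennreal (t powr (real (card I) / 2)) * emeasure (lborel_pi I) (C \<inter> {x. sqnorm I x \<le> 1})"
proof (cases "t = 0")
  case True
  have "emeasure (lborel_pi I) (C \<inter> {x. sqnorm I x \<le> t})
      \<le> emeasure (lborel_pi I) {x \<in> space (lborel_pi I). sqnorm I x \<le> 0}"
    using C I True by (intro emeasure_mono) (auto simp: dilation_invariant_def)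
  also have "\<dots> = 0"
    using emeasure_sqnorm_le[OF I(1) order.refl] I by (simp add: power_0_left card_eq_0_iff)
  finally have "emeasure (lborel_pi I) (C \<inter> {x. sqnorm I x \<le> t}) = 0"
    by (simp add: le_zero_eq)
  then show ?thesis using True by simp
next
  case False
  with t have t: "t > 0" by simp
  define a where "a = 1 / sqrt t"
  have a: "a > 0" using t by (simp add: a_def)
  have "sqnorm I (dilate I a x) \<le> 1 \<longleftrightarrow> sqnorm I x \<le> t" for x
    using t by (simp add: sqnorm_dilate a_def power_divide field_simps)
  then have "dilate I a -` (C \<inter> {x. sqnorm I x \<le> 1}) \<inter> space (lborel_pi I) = C \<inter> {x. sqnorm I x \<le> t}"
    using C a by (auto simp: dilation_invariant_def)
  moreover have "C \<inter> {x. sqnorm I x \<le> 1} = C \<inter> {x \<in> space (lborel_pi I). sqnorm I x \<le> 1}"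
    using C by (auto simp: dilation_invariant_def)
  then have "C \<inter> {x. sqnorm I x \<le> 1} \<in> sets (lborel_pi I)"
    using C I by simp
  ultimately have "emeasure (lborel_pi I) (C \<inter> {x. sqnorm I x \<le> t})
      = ennreal ((1/a) ^ card I) * emeasure (lborel_pi I) (C \<inter> {x. sqnorm I x \<le> 1})"
    using emeasure_dilate_vimage[OF I(1) a] by metis
  also have "(1/a) ^ card I = (t powr (1/2)) ^ card I"
    using t by (simp add: a_def powr_half_sqrt)
  also have "\<dots> = t powr (real (card I) / 2)"
    using t by (simp add: powr_realpow[symmetric] powr_powr)
  finally show ?thesis .
qed

definition radial_density :: "nat \<Rightarrow> real \<Rightarrow> real" where
  "radial_density d u = indicator {0<..} u * (real d / 2) * u powr (real d / 2 - 1)"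

definition radial_measure :: "nat \<Rightarrow> real measure" where
  "radial_measure d = density lborel (\<lambda>u. ennreal (radial_density d u))"

lemma radial_density_nonneg: "0 \<le> radial_density d u"
  unfolding radial_density_def by (auto simp: indicator_def)

lemma radial_density_measurable[measurable]: "radial_density d \<in> borel_measurable borel"
  unfolding radial_density_def by measurable

lemma sets_radial_measure[measurable_cong, simp]: "sets (radial_measure d) = sets borel"
  by (simp add: radial_measure_def)

lemma space_radial_measure[simp]: "space (radial_measure d) = UNIV"
  by (simp add: radial_measure_def)

lemma sigma_finite_radial_measure: "sigma_finite_measure (radial_measure d)"
  unfolding radial_measure_def
  by (subst sigma_finite_measure.sigma_finite_iff_density_finite[OF sigma_finite_lborel]) auto

lemma AE_radial_measure_pos: "AE u in radial_measure d. u > 0"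
  unfolding radial_measure_def by (subst AE_density) (auto simp: radial_density_def indicator_def)

lemma emeasure_radial_measure_atMost:
  assumes d: "d \<ge> 1"
  shows "emeasure (radial_measure d) {..t} = ennreal ((max t 0) powr (real d / 2))"
proof (cases "t \<le> 0")
  case True
  have "emeasure (radial_measure d) {..t} = (\<integral>\<^sup>+ u. ennreal (radial_density d u) * indicator {..t} u \<partial>lborel)"
    by (simp add: radial_measure_def emeasure_density)
  also have "\<dots> = (\<integral>\<^sup>+ (u::real). 0 \<partial>lborel)"
    by (rule nn_integral_cong) (use True in \<open>auto simp: radial_density_def indicator_def\<close>)
  finally show ?thesis using True by simp
next
  case False
  then have t: "t > 0" by simp
  have "emeasure (radial_measure d) {..t} = (\<integral>\<^sup>+ u. ennreal (radial_density d u) * indicator {..t} u \<partial>lborel)"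
    by (simp add: radial_measure_def emeasure_density)
  also have "\<dots> = (\<integral>\<^sup>+ u. ennreal (indicator {0..t} u * ((real d / 2) * u powr (real d / 2 - 1))) \<partial>lborel)"
    by (intro nn_integral_cong_AE, rule AE_mp[OF AE_lborel_singleton[of 0]])
       (auto simp: radial_density_def indicator_def ennreal_mult')
  also have "\<dots> = ennreal ((real d / 2) * (t powr (real d / 2 - 1 + 1) / (real d / 2 - 1 + 1)))"
    using d t by (intro nn_integral_has_integral_lebesgue has_integral_mult_right has_integral_powr_from_0) auto
  also have "(real d / 2) * (t powr (real d / 2 - 1 + 1) / (real d / 2 - 1 + 1)) = (max t 0) powr (real d / 2)"
    using d t by simp
  finally show ?thesis .
qed

lemma emeasure_dilation_invariant_sqnorm_vimage:
  fixes I :: "'i set"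
  assumes I: "finite I" "I \<noteq> {}" and C: "dilation_invariant I C" "C \<in> sets (lborel_pi I)"
    and A: "A \<in> sets borel"
  shows "emeasure (lborel_pi I) (C \<inter> sqnorm I -` A)
       = emeasure (lborel_pi I) (C \<inter> {x. sqnorm I x \<le> 1}) * emeasure (radial_measure (card I)) A"
proof -
  define K where "K = emeasure (lborel_pi I) (C \<inter> {x. sqnorm I x \<le> 1})"
  have C_space: "C \<subseteq> space (lborel_pi I)" using C by (auto simp: dilation_invariant_def)
  have d: "card I \<ge> 1" using I by (simp add: Suc_leI card_gt_0_iff)
  have K_finite: "K < \<infinity>"
  proof -
    have "K \<le> emeasure (lborel_pi I) {x \<in> space (lborel_pi I). sqnorm I x \<le> 1}"
      unfolding K_def using C_space I by (intro emeasure_mono) auto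
    then show ?thesis using emeasure_sqnorm_le_1_finite[OF I(1)] by (simp add: le_less_trans)
  qed
  define M1 where "M1 = distr (density (lborel_pi I) (indicator C)) borel (sqnorm I)"
  define M2 where "M2 = density (radial_measure (card I)) (\<lambda>_. K)"
  have M1: "emeasure M1 B = emeasure (lborel_pi I) (C \<inter> sqnorm I -` B)" if "B \<in> sets borel" for B
  proof -
    have "C \<inter> sqnorm I -` B = C \<inter> (sqnorm I -` B \<inter> space (lborel_pi I))"
      using C_space by auto
    then show ?thesis
      unfolding M1_def using that C I by (simp add: emeasure_distr emeasure_restricted)
  qed
  have M2: "emeasure M2 B = K * emeasure (radial_measure (card I)) B" if "B \<in> sets borel" for B
    unfolding M2_def using that by (simp add: emeasure_density_const)
  have atMost: "emeasure (lborel_pi I) (C \<inter> sqnorm I -` {..t}) = K * emeasure (radial_measure (card I)) {..t}" for t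
  proof (cases "t \<ge> 0")
    case True
    have "emeasure (lborel_pi I) (C \<inter> sqnorm I -` {..t}) = emeasure (lborel_pi I) (C \<inter> {x. sqnorm I x \<le> t})"
      by (simp add: vimage_def)
    also have "\<dots> = ennreal (t powr (real (card I) / 2)) * K"
      unfolding K_def by (rule emeasure_dilation_invariant_sqnorm_le[OF I C True])
    finally show ?thesis using True d by (simp add: emeasure_radial_measure_atMost mult.commute)
  next
    case False
    then have "\<not> sqnorm I x \<le> t" for x using sqnorm_nonneg[of I x] by linarith
    then have "C \<inter> sqnorm I -` {..t} = {}" by auto
    then show ?thesis using False d by (simp add: emeasure_radial_measure_atMost)
  qed
  have "M1 = M2"
  proof (rule measure_eqI_generator_eq[where E="range atMost" and \<Omega>=UNIV and A="\<lambda>n. {..real n}"])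
    show "Int_stable (range (atMost :: real \<Rightarrow> _))"
      by (auto simp: Int_stable_def)
    show "emeasure M1 X = emeasure M2 X" if "X \<in> range atMost" for X
      using that by (auto simp: M1 M2 atMost)
    show "sets M1 = sigma_sets UNIV (range atMost)" "sets M2 = sigma_sets UNIV (range atMost)"
      unfolding M1_def M2_def by (simp_all add: borel_eq_atMost)
    show "(\<Union>i. {..real i}) = UNIV" by (auto intro: real_arch_simple)
    show "emeasure M1 {..real i} \<noteq> \<infinity>" for i
      using K_finite d by (simp add: M1 atMost emeasure_radial_measure_atMost ennreal_mult_eq_top_iff)
  qed auto
  then show ?thesis using A by (metis M1 M2 K_def)
qed

definition sphere_measure :: "'i set \<Rightarrow> ('i \<Rightarrow> real) measure" where
  "sphere_measure I = distr (density (lborel_pi I) (indicator {x \<in> space (lborel_pi I). sqnorm I x \<le> 1}))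
     (lborel_pi I) (direction I)"

lemma sets_sphere_measure[measurable_cong, simp]: "sets (sphere_measure I) = sets (lborel_pi I)"
  by (simp add: sphere_measure_def)

lemma space_sphere_measure[simp]: "space (sphere_measure I) = space (lborel_pi I)"
  by (simp add: sphere_measure_def)

lemma emeasure_sphere_measure:
  assumes "finite I" "B \<in> sets (lborel_pi I)"
  shows "emeasure (sphere_measure I) B
       = emeasure (lborel_pi I) ((direction I -` B \<inter> space (lborel_pi I)) \<inter> {x. sqnorm I x \<le> 1})"
proof -
  have "emeasure (sphere_measure I) B
      = emeasure (lborel_pi I) ({x \<in> space (lborel_pi I). sqnorm I x \<le> 1} \<inter> (direction I -` B \<inter> space (lborel_pi I)))"
    unfolding sphere_measure_def using assms by (simp add: emeasure_distr emeasure_restricted)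
  also have "{x \<in> space (lborel_pi I). sqnorm I x \<le> 1} \<inter> (direction I -` B \<inter> space (lborel_pi I))
      = (direction I -` B \<inter> space (lborel_pi I)) \<inter> {x. sqnorm I x \<le> 1}"
    by auto
  finally show ?thesis .
qed

lemma finite_measure_sphere_measure: "finite I \<Longrightarrow> finite_measure (sphere_measure I)"
proof
  assume I: "finite I"
  have "emeasure (sphere_measure I) (space (sphere_measure I))
      \<le> emeasure (lborel_pi I) {x \<in> space (lborel_pi I). sqnorm I x \<le> 1}"
    using I by (subst emeasure_sphere_measure) (auto intro!: emeasure_mono)
  then show "emeasure (sphere_measure I) (space (sphere_measure I)) \<noteq> \<infinity>"
    using emeasure_sqnorm_le_1_finite[OF I] by (auto simp: top_unique)
qed

lemma AE_sphere_measure_sqnorm: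
  fixes I :: "'i set"
  assumes I: "finite I" "I \<noteq> {}"
  shows "AE w in sphere_measure I. sqnorm I w = 1"
proof -
  have "AE x in density (lborel_pi I) (indicator {x \<in> space (lborel_pi I). sqnorm I x \<le> 1}).
      sqnorm I (direction I x) = 1"
    using AE_sqnorm_nonzero[OF I] I
    by (subst AE_density) (auto elim!: eventually_mono simp: sqnorm_direction)
  then show ?thesis unfolding sphere_measure_def using I by (subst AE_distr_iff) auto
qed

theorem distr_lborel_pi_polar:
  fixes I :: "'i set"
  assumes I: "finite I" "I \<noteq> {}"
  shows "distr (lborel_pi I) (borel \<Otimes>\<^sub>M lborel_pi I) (\<lambda>x. (sqnorm I x, direction I x))
       = radial_measure (card I) \<Otimes>\<^sub>M sphere_measure I"
proof (rule pair_measure_eqI[symmetric])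
  interpret finite_measure "sphere_measure I" using finite_measure_sphere_measure[OF I(1)] .
  show "sigma_finite_measure (radial_measure (card I))" by (rule sigma_finite_radial_measure)
  show "sigma_finite_measure (sphere_measure I)" ..
  show "sets (radial_measure (card I) \<Otimes>\<^sub>M sphere_measure I)
      = sets (distr (lborel_pi I) (borel \<Otimes>\<^sub>M lborel_pi I) (\<lambda>x. (sqnorm I x, direction I x)))"
    by (simp cong: sets_pair_measure_cong)
  fix A B assume A: "A \<in> sets (radial_measure (card I))" and B: "B \<in> sets (sphere_measure I)"
  define C where "C = direction I -` B \<inter> space (lborel_pi I)"
  have C_sets: "C \<in> sets (lborel_pi I)"
    unfolding C_def using measurable_sets[OF direction_measurable[OF I(1)], of B] B by simp
  have "dilation_invariant I C"
    unfolding dilation_invariant_def C_def by (auto simp: direction_dilate dilate_in_space)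
  have "emeasure (distr (lborel_pi I) (borel \<Otimes>\<^sub>M lborel_pi I) (\<lambda>x. (sqnorm I x, direction I x))) (A \<times> B)
      = emeasure (lborel_pi I) ((\<lambda>x. (sqnorm I x, direction I x)) -` (A \<times> B) \<inter> space (lborel_pi I))"
    using A B I by (intro emeasure_distr) auto
  also have "(\<lambda>x. (sqnorm I x, direction I x)) -` (A \<times> B) \<inter> space (lborel_pi I) = C \<inter> sqnorm I -` A"
    unfolding C_def by auto
  also have "emeasure (lborel_pi I) (C \<inter> sqnorm I -` A)
      = emeasure (lborel_pi I) (C \<inter> {x. sqnorm I x \<le> 1}) * emeasure (radial_measure (card I)) A"
    using A by (intro emeasure_dilation_invariant_sqnorm_vimage[OF I \<open>dilation_invariant I C\<close> C_sets]) auto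
  also have "emeasure (lborel_pi I) (C \<inter> {x. sqnorm I x \<le> 1}) = emeasure (sphere_measure I) B"
    unfolding C_def using B I by (simp add: emeasure_sphere_measure)
  finally show "emeasure (radial_measure (card I)) A * emeasure (sphere_measure I) B
      = emeasure (distr (lborel_pi I) (borel \<Otimes>\<^sub>M lborel_pi I) (\<lambda>x. (sqnorm I x, direction I x))) (A \<times> B)"
    by (simp add: mult.commute)
qed

lemma nn_integral_polar:
  fixes I :: "'i set"
  assumes I: "finite I" "I \<noteq> {}" and F[measurable]: "F \<in> borel_measurable (lborel_pi I)"
  shows "(\<integral>\<^sup>+ x. F x \<partial>lborel_pi I)
       = (\<integral>\<^sup>+ w. \<integral>\<^sup>+ u. F (dilate I (sqrt u) w) \<partial>radial_measure (card I) \<partial>sphere_measure I)"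
proof -
  interpret sphere: finite_measure "sphere_measure I" using finite_measure_sphere_measure[OF I(1)] .
  interpret pair_sigma_finite "radial_measure (card I)" "sphere_measure I"
    using sigma_finite_radial_measure
    by (intro pair_sigma_finite.intro) (auto intro: sphere.sigma_finite_measure_axioms)
  have "(\<integral>\<^sup>+ x. F x \<partial>lborel_pi I)
      = (\<integral>\<^sup>+ x. (\<lambda>(u, w). F (dilate I (sqrt u) w)) (sqnorm I x, direction I x) \<partial>lborel_pi I)"
    by (intro nn_integral_cong_AE, rule AE_mp[OF AE_sqnorm_nonzero[OF I]])
      (auto intro!: AE_I2 simp: dilate_direction)
  also have "\<dots> = (\<integral>\<^sup>+ p. (\<lambda>(u, w). F (dilate I (sqrt u) w)) p
      \<partial>distr (lborel_pi I) (borel \<Otimes>\<^sub>M lborel_pi I) (\<lambda>x. (sqnorm I x, direction I x)))"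
    using I by (subst nn_integral_distr) auto
  also have "\<dots> = (\<integral>\<^sup>+ w. \<integral>\<^sup>+ u. F (dilate I (sqrt u) w) \<partial>radial_measure (card I) \<partial>sphere_measure I)"
    using I by (simp add: distr_lborel_pi_polar nn_integral_snd[symmetric])
  finally show ?thesis .
qed

lemma nn_integral_sqnorm_eq_sphere_radial:
  fixes I :: "'i set" and \<Psi> :: "real \<Rightarrow> ennreal"
  assumes I: "finite I" "I \<noteq> {}" and [measurable]: "\<Psi> \<in> borel_measurable borel"
  shows "(\<integral>\<^sup>+ x. \<Psi> (sqnorm I x) \<partial>lborel_pi I)
       = emeasure (sphere_measure I) (space (lborel_pi I)) * (\<integral>\<^sup>+ u. \<Psi> u \<partial>radial_measure (card I))"
proof -
  have "(\<integral>\<^sup>+ u. \<Psi> (sqnorm I (dilate I (sqrt u) w)) \<partial>radial_measure (card I))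
      = (\<integral>\<^sup>+ u. \<Psi> u \<partial>radial_measure (card I))" if "sqnorm I w = 1" for w
    by (intro nn_integral_cong_AE, rule AE_mp[OF AE_radial_measure_pos])
      (auto intro!: AE_I2 simp: sqnorm_dilate that)
  note on_sphere = this
  have "(\<integral>\<^sup>+ w. \<integral>\<^sup>+ u. \<Psi> (sqnorm I (dilate I (sqrt u) w)) \<partial>radial_measure (card I) \<partial>sphere_measure I)
      = (\<integral>\<^sup>+ w. (\<integral>\<^sup>+ u. \<Psi> u \<partial>radial_measure (card I)) \<partial>sphere_measure I)"
    by (intro nn_integral_cong_AE, rule AE_mp[OF AE_sphere_measure_sqnorm[OF I]])
      (auto intro!: AE_I2 simp: on_sphere)
  then show ?thesis
    using I by (simp add: nn_integral_polar mult.commute)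
qed

lemma nn_integral_exp_minus_sqnorm:
  fixes I :: "'i set"
  assumes I: "finite I"
  shows "(\<integral>\<^sup>+ x. ennreal (exp (- sqnorm I x)) \<partial>lborel_pi I) = ennreal (pi powr (real (card I) / 2))"
proof -
  have gauss: "(\<integral>\<^sup>+ t. ennreal (exp (- t\<^sup>2)) \<partial>lborel) = ennreal (sqrt pi)"
  proof -
    have "has_bochner_integral lborel (\<lambda>x::real. exp (- x\<^sup>2)) (2 *\<^sub>R (sqrt pi / 2))"
      by (rule has_bochner_integral_even_function[OF gaussian_moment_0]) simp
    then show ?thesis
      by (subst nn_integral_eq_integrable) (auto simp: has_bochner_integral_iff)
  qed
  have "(\<integral>\<^sup>+ x. ennreal (exp (- sqnorm I x)) \<partial>lborel_pi I)
      = (\<integral>\<^sup>+ x. (\<Prod>j\<in>I. ennreal (exp (- (x j)\<^sup>2))) \<partial>lborel_pi I)"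
    using I by (intro nn_integral_cong) (simp add: sqnorm_def sum_negf[symmetric] exp_sum prod_ennreal)
  also have "\<dots> = (\<Prod>j\<in>I. (\<integral>\<^sup>+ t. ennreal (exp (- t\<^sup>2)) \<partial>lborel))"
    using I by (intro lborel_prod.product_nn_integral_prod) auto
  also have "\<dots> = ennreal (sqrt pi ^ card I)"
    by (simp add: gauss prod_ennreal ennreal_power)
  also have "sqrt pi ^ card I = pi powr (real (card I) / 2)"
    by (simp add: powr_half_sqrt[symmetric] powr_realpow[symmetric] powr_powr)
  finally show ?thesis .
qed

lemma nn_integral_radial_measure_exp:
  assumes d: "d \<ge> 1"
  shows "(\<integral>\<^sup>+ u. ennreal (exp (- u)) \<partial>radial_measure d) = ennreal (real d / 2 * Gamma (real d / 2))"
proof -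
  have "(\<integral>\<^sup>+ u. ennreal (exp (- u)) \<partial>radial_measure d)
      = (\<integral>\<^sup>+ u. ennreal (radial_density d u) * ennreal (exp (- u)) \<partial>lborel)"
    unfolding radial_measure_def by (subst nn_integral_density) auto
  also have "\<dots> = (\<integral>\<^sup>+ u. ennreal (real d / 2) * ennreal (indicator {0..} u * u powr (real d / 2 - 1) / exp u) \<partial>lborel)"
    by (intro nn_integral_cong_AE, rule AE_mp[OF AE_lborel_singleton[of 0]])
       (auto intro!: AE_I2 simp: radial_density_def indicator_def ennreal_mult'[symmetric] exp_minus field_simps)
  also have "\<dots> = ennreal (real d / 2) * ennreal (Gamma (real d / 2))"
    using d by (subst nn_integral_cmult) (auto simp: Gamma_conv_nn_integral_real)
  also have "\<dots> = ennreal (real d / 2 * Gamma (real d / 2))"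
    using d Gamma_real_pos[of "real d / 2"] by (simp add: ennreal_mult'[symmetric])
  finally show ?thesis .
qed

lemma emeasure_sphere_measure_space:
  fixes I :: "'i set"
  assumes I: "finite I" "I \<noteq> {}"
  shows "emeasure (sphere_measure I) (space (lborel_pi I))
       = ennreal (pi powr (real (card I) / 2) / (real (card I) / 2 * Gamma (real (card I) / 2)))"
proof -
  define g where "g = real (card I) / 2 * Gamma (real (card I) / 2)"
  have d: "card I \<ge> 1" using I by (simp add: Suc_leI card_gt_0_iff)
  then have g: "g > 0" unfolding g_def by (intro mult_pos_pos Gamma_real_pos) auto
  have "ennreal (pi powr (real (card I) / 2)) = emeasure (sphere_measure I) (space (lborel_pi I)) * ennreal g"
    using nn_integral_sqnorm_eq_sphere_radial[OF I, of "\<lambda>u. ennreal (exp (- u))"]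
      nn_integral_exp_minus_sqnorm[OF I(1)] nn_integral_radial_measure_exp[OF d]
    by (simp add: g_def)
  then have "ennreal (pi powr (real (card I) / 2)) * ennreal (1 / g)
      = emeasure (sphere_measure I) (space (lborel_pi I)) * (ennreal g * ennreal (1 / g))"
    by (simp add: mult.assoc)
  also have "ennreal g * ennreal (1 / g) = 1"
    using g by (simp flip: ennreal_mult)
  finally show ?thesis
    using g by (simp add: ennreal_mult[symmetric] g_def)
qed

definition radial_const :: "nat \<Rightarrow> real" where
  "radial_const d = pi powr (real d / 2) / Gamma (real d / 2)"

lemma radial_const_pos: "d \<ge> 1 \<Longrightarrow> radial_const d > 0"
  unfolding radial_const_def by (intro divide_pos_pos Gamma_real_pos) auto

lemma radial_const_nonneg: "0 \<le> radial_const d"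
  by (cases "d = 0") (auto simp: radial_const_def intro: less_imp_le radial_const_pos[unfolded radial_const_def])

theorem nn_integral_radial:
  fixes I :: "'i set" and \<Psi> :: "real \<Rightarrow> ennreal"
  assumes I: "finite I" "I \<noteq> {}" and [measurable]: "\<Psi> \<in> borel_measurable borel"
  shows "(\<integral>\<^sup>+ x. \<Psi> (sqnorm I x) \<partial>lborel_pi I) =
     (\<integral>\<^sup>+ u. ennreal (indicator {0<..} u * radial_const (card I) * u powr (real (card I) / 2 - 1)) * \<Psi> u \<partial>lborel)"
proof -
  define d where "d = card I"
  have d: "d \<ge> 1" using I by (simp add: d_def Suc_leI card_gt_0_iff)
  define S where "S = pi powr (real d / 2) / (real d / 2 * Gamma (real d / 2))"
  have S: "S \<ge> 0" using Gamma_real_pos[of "real d / 2"] d by (simp add: S_def)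
  have "S * radial_density d u = indicator {0<..} u * radial_const d * u powr (real d / 2 - 1)" for u
    using d by (auto simp: S_def radial_density_def radial_const_def indicator_def)
  then have pointwise: "ennreal S * (ennreal (radial_density d u) * \<Psi> u)
      = ennreal (indicator {0<..} u * radial_const d * u powr (real d / 2 - 1)) * \<Psi> u" for u
    by (metis S ennreal_mult mult.assoc radial_density_nonneg)
  have "(\<integral>\<^sup>+ x. \<Psi> (sqnorm I x) \<partial>lborel_pi I)
      = ennreal S * (\<integral>\<^sup>+ u. ennreal (radial_density d u) * \<Psi> u \<partial>lborel)"
    using I by (simp add: nn_integral_sqnorm_eq_sphere_radial emeasure_sphere_measure_space
        radial_measure_def nn_integral_density S_def d_def)
  also have "\<dots> = (\<integral>\<^sup>+ u. ennreal S * (ennreal (radial_density d u) * \<Psi> u) \<partial>lborel)"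
    by (rule nn_integral_cmult[symmetric]) auto
  also have "\<dots> = (\<integral>\<^sup>+ u. ennreal (indicator {0<..} u * radial_const d * u powr (real d / 2 - 1)) * \<Psi> u \<partial>lborel)"
    by (simp only: pointwise)
  finally show ?thesis
    unfolding d_def .
qed

section \<open>The substitution u = v r / (1 - r)\<close>

lemma measurable_curry_compose:
  assumes "(\<lambda>p. G (fst p) (snd p)) \<in> borel_measurable (M' \<Otimes>\<^sub>M borel)"
    and "f \<in> measurable M M'" and "g \<in> borel_measurable M"
  shows "(\<lambda>x. G (f x) (g x)) \<in> borel_measurable M"
proof -
  have "(\<lambda>x. (f x, g x)) \<in> measurable M (M' \<Otimes>\<^sub>M borel)" using assms(2,3) by measurable
  from measurable_comp[OF this assms(1)] show ?thesis by (simp add: o_def)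
qed

lemma nn_integral_indicator_incseq:
  fixes F :: "real \<Rightarrow> real"
  assumes A: "incseq A" "\<And>i. A i \<in> sets borel" and F: "\<And>x. 0 \<le> F x" "F \<in> borel_measurable borel"
  shows "(SUP i. \<integral>\<^sup>+ x. ennreal (F x * indicator (A i) x) \<partial>lborel)
       = (\<integral>\<^sup>+ x. ennreal (F x * indicator (\<Union>i. A i) x) \<partial>lborel)"
proof -
  have SUP_eq: "(SUP i. ennreal (F x * indicator (A i) x)) = ennreal (F x * indicator (\<Union>i. A i) x)" for x
  proof (cases "x \<in> (\<Union>i. A i)")
    case True
    then obtain i where i: "x \<in> A i" by auto
    show ?thesis
    proof (rule antisym)
      show "(SUP i. ennreal (F x * indicator (A i) x)) \<le> ennreal (F x * indicator (\<Union>i. A i) x)"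
        using True by (intro SUP_least) (auto simp: indicator_def F)
      have "ennreal (F x * indicator (\<Union>i. A i) x) = ennreal (F x * indicator (A i) x)"
        using True i by (simp add: indicator_def)
      also have "\<dots> \<le> (SUP i. ennreal (F x * indicator (A i) x))" by (rule SUP_upper) simp
      finally show "ennreal (F x * indicator (\<Union>i. A i) x) \<le> (SUP i. ennreal (F x * indicator (A i) x))" .
    qed
  qed (auto simp: indicator_def)
  have "(SUP i. \<integral>\<^sup>+ x. ennreal (F x * indicator (A i) x) \<partial>lborel)
      = (\<integral>\<^sup>+ x. (SUP i. ennreal (F x * indicator (A i) x)) \<partial>lborel)"
  proof (rule nn_integral_monotone_convergence_SUP[symmetric])
    show "incseq (\<lambda>i x. ennreal (F x * indicator (A i) x))"
      using A(1) F(1) by (auto simp: incseq_def le_fun_def indicator_def subset_iff intro!: ennreal_leI)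
    show "(\<lambda>x. ennreal (F x * indicator (A i) x)) \<in> borel_measurable lborel" for i
      using A(2) F(2) by measurable
  qed
  then show ?thesis by (simp only: SUP_eq)
qed

definition shrink_jacobian :: "real \<Rightarrow> nat \<Rightarrow> real \<Rightarrow> real" where
  "shrink_jacobian v d r = v powr (real d / 2) * (1 - r) powr (- (real d / 2) - 1)"

lemma shrink_jacobian_nonneg: "0 \<le> shrink_jacobian v d r"
  by (simp add: shrink_jacobian_def)

lemma radial_density_odds:
  assumes v: "v > 0" and r: "0 < r" "r < 1"
  shows "radial_density d (v * r / (1 - r)) * (v / (1 - r)\<^sup>2) = radial_density d r * shrink_jacobian v d r"
proof -
  define a where "a = real d / 2 - 1"
  have odds_powr: "(v * r / (1 - r)) powr a = v powr a * r powr a * (1 - r) powr (- a)"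
    using v r by (subst powr_divide) (auto simp: powr_mult powr_minus divide_inverse)
  have v_powr: "v powr a * v = v powr (real d / 2)"
    using v by (simp add: a_def powr_diff)
  have "(1 - r)\<^sup>2 = (1 - r) powr 2"
    using r by (simp add: powr_realpow)
  then have "(1 - r) powr (- a) * inverse ((1 - r)\<^sup>2) = (1 - r) powr (- a - 2)"
    using r by (simp add: powr_diff divide_inverse)
  also have "- a - 2 = - (real d / 2) - 1"
    by (simp add: a_def)
  finally have one_minus_powr: "(1 - r) powr (- a) * inverse ((1 - r)\<^sup>2) = (1 - r) powr (- (real d / 2) - 1)" .
  have "radial_density d (v * r / (1 - r)) = (real d / 2) * (v * r / (1 - r)) powr a"
    using v r by (simp add: radial_density_def a_def)
  then have "radial_density d (v * r / (1 - r)) * (v / (1 - r)\<^sup>2)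
      = (real d / 2) * (v powr a * r powr a * (1 - r) powr (- a)) * (v * inverse ((1 - r)\<^sup>2))"
    unfolding odds_powr by (simp only: divide_inverse)
  also have "\<dots> = ((real d / 2) * r powr a) * (v powr a * v) * ((1 - r) powr (- a) * inverse ((1 - r)\<^sup>2))"
    by (simp only: ac_simps)
  also have "\<dots> = radial_density d r * shrink_jacobian v d r"
    unfolding v_powr one_minus_powr using r by (simp add: radial_density_def shrink_jacobian_def a_def)
  finally show ?thesis .
qed

lemma has_real_derivative_odds:
  assumes "r < 1"
  shows "((\<lambda>r. v * r / (1 - r)) has_real_derivative (v / (1 - r)\<^sup>2)) (at r)"
proof -
  have "((\<lambda>r. v * r / (1 - r)) has_real_derivative ((v * (1 - r) - v * r * (- 1)) / (1 - r)\<^sup>2)) (at r)"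
    using assms by (intro derivative_eq_intros) (auto simp: power2_eq_square)
  then show ?thesis by (simp add: algebra_simps)
qed

lemma nn_integral_odds_substitution_Icc:
  fixes F :: "real \<Rightarrow> real"
  assumes v: "v > 0" and b: "0 \<le> b" "b < 1" and F: "F \<in> borel_measurable borel"
  shows "(\<integral>\<^sup>+ u. ennreal (F u * indicator {0..v * b / (1 - b)} u) \<partial>lborel)
       = (\<integral>\<^sup>+ r. ennreal (F (v * r / (1 - r)) * (v / (1 - r)\<^sup>2) * indicator {0..b} r) \<partial>lborel)"
proof -
  have "(\<integral>\<^sup>+ u. ennreal (F u * indicator {v * 0 / (1 - 0)..v * b / (1 - b)} u) \<partial>lborel)
      = (\<integral>\<^sup>+ r. ennreal (F (v * r / (1 - r)) * (v / (1 - r)\<^sup>2) * indicator {0..b} r) \<partial>lborel)"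
  proof (rule nn_integral_substitution)
    show "set_borel_measurable borel {v * 0 / (1 - 0)..v * b / (1 - b)} F"
      using F by (simp add: set_borel_measurable_def)
    show "((\<lambda>r. v * r / (1 - r)) has_real_derivative v / (1 - r)\<^sup>2) (at r)" if "r \<in> {0..b}" for r
      using that b by (intro has_real_derivative_odds) auto
    show "continuous_on {0..b} (\<lambda>r. v / (1 - r)\<^sup>2)"
      using b by (intro continuous_intros) auto
  qed (use v b in auto)
  then show ?thesis by simp
qed

lemma nn_integral_odds_substitution:
  fixes F :: "real \<Rightarrow> real"
  assumes v: "v > 0" and F: "F \<in> borel_measurable borel" "\<And>u. 0 \<le> F u"
  shows "(\<integral>\<^sup>+ u. ennreal (F u * indicator {0..} u) \<partial>lborel)
       = (\<integral>\<^sup>+ r. ennreal (F (v * r / (1 - r)) * (v / (1 - r)\<^sup>2) * indicator {0..<1} r) \<partial>lborel)"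
proof -
  define K where "K r = F (v * r / (1 - r)) * (v / (1 - r)\<^sup>2)" for r
  define b where "b n = 1 - 1 / (real n + 2)" for n :: nat
  have K: "K \<in> borel_measurable borel" "\<And>r. 0 \<le> K r"
    unfolding K_def using F v by (auto intro!: measurable_compose[OF _ F(1)] mult_nonneg_nonneg)
  have b: "0 < b n" "b n < 1" "v * b n / (1 - b n) = v * (real n + 1)" for n
    unfolding b_def by (auto simp: field_simps)
  have U1: "(\<Union>n. {0..v * (real n + 1)}) = {0..}"
  proof -
    have "\<exists>n. x \<le> v * (real n + 1)" for x
    proof -
      obtain n where "x / v \<le> real n" using real_arch_simple by blast
      then have "x \<le> v * (real n + 1)" using v by (simp add: field_simps)
      then show ?thesis ..
    qed
    then show ?thesis by auto
  qed
  have U2: "(\<Union>n. {0..b n}) = {0..<1}"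
  proof (rule set_eqI, rule iffI)
    fix x :: real assume "x \<in> (\<Union>n. {0..b n})"
    then obtain n where "0 \<le> x" "x \<le> b n" by auto
    then show "x \<in> {0..<1}" using b(2)[of n] by auto
  next
    fix x :: real assume x: "x \<in> {0..<1}"
    obtain n where "1 / (1 - x) \<le> real n" using real_arch_simple by blast
    then have "x \<le> b n" using x by (simp add: b_def field_simps)
    then show "x \<in> (\<Union>n. {0..b n})" using x by auto
  qed
  have inc1: "incseq (\<lambda>n. {0..v * (real n + 1)})"
    using v by (auto simp: incseq_def)
  have inc2: "incseq (\<lambda>n. {0..b n})"
    unfolding b_def by (auto simp: incseq_def frac_le intro: order_trans)
  have "(\<integral>\<^sup>+ u. ennreal (F u * indicator {0..} u) \<partial>lborel)
      = (SUP n. \<integral>\<^sup>+ u. ennreal (F u * indicator {0..v * (real n + 1)} u) \<partial>lborel)"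
    by (subst nn_integral_indicator_incseq[OF inc1 _ F(2,1)]) (auto simp: U1)
  also have "\<dots> = (SUP n. \<integral>\<^sup>+ r. ennreal (K r * indicator {0..b n} r) \<partial>lborel)"
    using nn_integral_odds_substitution_Icc[OF v less_imp_le[OF b(1)] b(2) F(1)] by (simp add: b(3) K_def)
  also have "\<dots> = (\<integral>\<^sup>+ r. ennreal (K r * indicator {0..<1} r) \<partial>lborel)"
    by (subst nn_integral_indicator_incseq[OF inc2 _ K(2,1)]) (auto simp: U2)
  finally show ?thesis by (simp add: K_def)
qed

lemma nn_integral_radial_measure_odds:
  fixes H :: "real \<Rightarrow> real \<Rightarrow> real"
  assumes v: "v > 0"
    and H: "(\<lambda>p. H (fst p) (snd p)) \<in> borel_measurable (borel \<Otimes>\<^sub>M borel)" "\<And>r u. 0 \<le> H r u"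
  shows "(\<integral>\<^sup>+ u. ennreal (H (u / (v + u)) u) \<partial>radial_measure d)
       = (\<integral>\<^sup>+ r. ennreal (indicator {..<1} r * shrink_jacobian v d r * H r (v * r / (1 - r))) \<partial>radial_measure d)"
proof -
  define F where "F u = radial_density d u * H (u / (v + u)) u" for u
  have H_ray: "(\<lambda>u. H (u / (v + u)) u) \<in> borel_measurable borel"
    and H_odds: "(\<lambda>r. H r (v * r / (1 - r))) \<in> borel_measurable borel"
    by (rule measurable_curry_compose[OF H(1)]; simp)+
  then have F: "F \<in> borel_measurable borel" "\<And>u. 0 \<le> F u"
    unfolding F_def by (simp_all add: radial_density_nonneg H(2))
  have odds: "F (v * r / (1 - r)) * (v / (1 - r)\<^sup>2) * indicator {0..<1} r
      = radial_density d r * (indicator {..<1} r * shrink_jacobian v d r * H r (v * r / (1 - r)))" for r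
  proof (cases "0 < r \<and> r < 1")
    case True
    then have "v * r / (1 - r) / (v + v * r / (1 - r)) = r" using v by (simp add: field_simps)
    with radial_density_odds[OF v, of r d] True show ?thesis
      by (simp add: F_def ac_simps)
  qed (auto simp: F_def radial_density_def)
  have "(\<integral>\<^sup>+ u. ennreal (H (u / (v + u)) u) \<partial>radial_measure d) = (\<integral>\<^sup>+ u. ennreal (F u * indicator {0..} u) \<partial>lborel)"
    unfolding radial_measure_def using H_ray
    by (subst nn_integral_density)
      (auto intro!: nn_integral_cong simp: F_def radial_density_def indicator_def ennreal_mult'[symmetric])
  also have "\<dots> = (\<integral>\<^sup>+ r. ennreal (F (v * r / (1 - r)) * (v / (1 - r)\<^sup>2) * indicator {0..<1} r) \<partial>lborel)"
    by (rule nn_integral_odds_substitution[OF v F])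
  also have "\<dots> = (\<integral>\<^sup>+ r. ennreal (radial_density d r)
      * ennreal (indicator {..<1} r * shrink_jacobian v d r * H r (v * r / (1 - r))) \<partial>lborel)"
    unfolding odds by (simp add: ennreal_mult' radial_density_nonneg)
  also have "\<dots> = (\<integral>\<^sup>+ r. ennreal (indicator {..<1} r * shrink_jacobian v d r * H r (v * r / (1 - r))) \<partial>radial_measure d)"
    unfolding radial_measure_def shrink_jacobian_def using H_odds by (intro nn_integral_density[symmetric]) simp_all
  finally show ?thesis .
qed

section \<open>Shrinking a vector into the unit ball\<close>

definition shrink :: "'i set \<Rightarrow> real \<Rightarrow> ('i \<Rightarrow> real) \<Rightarrow> ('i \<Rightarrow> real)" where
  "shrink I v x = restrict (\<lambda>j. x j / sqrt (v + sqnorm I x)) I"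

lemma shrink_measurable[measurable]: "finite I \<Longrightarrow> shrink I v \<in> measurable (lborel_pi I) (lborel_pi I)"
  unfolding shrink_def by measurable

lemma shrink_dilate:
  assumes "sqnorm I w = 1" "u > 0" "v > 0"
  shows "shrink I v (dilate I (sqrt u) w) = dilate I (sqrt (u / (v + u))) w"
proof -
  have "sqnorm I (dilate I (sqrt u) w) = u" using assms by (simp add: sqnorm_dilate)
  then show ?thesis using assms by (simp add: shrink_def dilate_def fun_eq_iff real_sqrt_divide)
qed

theorem nn_integral_shrink:
  fixes I :: "'i set" and G :: "('i \<Rightarrow> real) \<Rightarrow> real \<Rightarrow> real"
  assumes I: "finite I" "I \<noteq> {}" and v: "v > 0"
    and G: "(\<lambda>p. G (fst p) (snd p)) \<in> borel_measurable (lborel_pi I \<Otimes>\<^sub>M borel)" "\<And>R s. 0 \<le> G R s"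
  shows "(\<integral>\<^sup>+ x. ennreal (G (shrink I v x) (sqnorm I x)) \<partial>lborel_pi I)
       = (\<integral>\<^sup>+ R. ennreal (indicator {R. sqnorm I R < 1} R * shrink_jacobian v (card I) (sqnorm I R)
              * G R (v * sqnorm I R / (1 - sqnorm I R))) \<partial>lborel_pi I)"
proof -
  let ?\<nu> = "radial_measure (card I)"
  have on_ray: "(\<integral>\<^sup>+ u. ennreal (G (shrink I v (dilate I (sqrt u) w)) (sqnorm I (dilate I (sqrt u) w))) \<partial>?\<nu>)
     = (\<integral>\<^sup>+ r. ennreal (indicator {R. sqnorm I R < 1} (dilate I (sqrt r) w)
          * shrink_jacobian v (card I) (sqnorm I (dilate I (sqrt r) w))
          * G (dilate I (sqrt r) w) (v * sqnorm I (dilate I (sqrt r) w) / (1 - sqnorm I (dilate I (sqrt r) w)))) \<partial>?\<nu>)"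
    if w: "sqnorm I w = 1" for w
  proof -
    have H: "(\<lambda>p. G (dilate I (sqrt (fst p)) w) (snd p)) \<in> borel_measurable (borel \<Otimes>\<^sub>M borel)"
      by (rule measurable_curry_compose[OF G(1)]) measurable
    have "(\<integral>\<^sup>+ u. ennreal (G (shrink I v (dilate I (sqrt u) w)) (sqnorm I (dilate I (sqrt u) w))) \<partial>?\<nu>)
        = (\<integral>\<^sup>+ u. ennreal (G (dilate I (sqrt (u / (v + u))) w) u) \<partial>?\<nu>)"
      by (intro nn_integral_cong_AE, rule AE_mp[OF AE_radial_measure_pos])
        (auto intro!: AE_I2 simp: shrink_dilate w v sqnorm_dilate)
    also have "\<dots> = (\<integral>\<^sup>+ r. ennreal (indicator {..<1} r * shrink_jacobian v (card I) r
        * G (dilate I (sqrt r) w) (v * r / (1 - r))) \<partial>?\<nu>)"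
      using nn_integral_radial_measure_odds[OF v H G(2)] by simp
    also have "\<dots> = (\<integral>\<^sup>+ r. ennreal (indicator {R. sqnorm I R < 1} (dilate I (sqrt r) w)
          * shrink_jacobian v (card I) (sqnorm I (dilate I (sqrt r) w))
          * G (dilate I (sqrt r) w) (v * sqnorm I (dilate I (sqrt r) w) / (1 - sqnorm I (dilate I (sqrt r) w)))) \<partial>?\<nu>)"
      by (intro nn_integral_cong_AE, rule AE_mp[OF AE_radial_measure_pos])
        (auto intro!: AE_I2 simp: w sqnorm_dilate indicator_def)
    finally show ?thesis .
  qed
  have "(\<lambda>x. G (shrink I v x) (sqnorm I x)) \<in> borel_measurable (lborel_pi I)"
    using I by (intro measurable_curry_compose[OF G(1)]) auto
  moreover have "(\<lambda>R. G R (v * sqnorm I R / (1 - sqnorm I R))) \<in> borel_measurable (lborel_pi I)"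
    using I by (intro measurable_curry_compose[OF G(1)]) auto
  ultimately show ?thesis
    using I unfolding shrink_jacobian_def
    by (simp add: nn_integral_polar cong: nn_integral_cong_simp)
       (intro nn_integral_cong_AE, rule AE_mp[OF AE_sphere_measure_sqnorm[OF I]],
         auto intro!: AE_I2 simp: on_ray[unfolded shrink_jacobian_def])
qed

section \<open>Block vectors\<close>

definition block_idx :: "(nat \<Rightarrow> nat) \<Rightarrow> nat \<Rightarrow> nat set \<Rightarrow> (nat \<times> nat \<times> nat) set" where
  "block_idx n m K = {(i, r, c). i \<in> K \<and> r < n i \<and> c < m}"

definition shrink_blocks ::
  "(nat \<Rightarrow> nat) \<Rightarrow> nat \<Rightarrow> real \<Rightarrow> nat set \<Rightarrow> ((nat \<times> nat \<times> nat) \<Rightarrow> real) \<Rightarrow> ((nat \<times> nat \<times> nat) \<Rightarrow> real)" where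
  "shrink_blocks n m v K z = restrict (\<lambda>(i, r, c). z (i, r, c) / sqrt (v + R_sq n m z i)) (block_idx n m K)"

definition blocks_sq :: "(nat \<Rightarrow> nat) \<Rightarrow> nat \<Rightarrow> nat set \<Rightarrow> ((nat \<times> nat \<times> nat) \<Rightarrow> real) \<Rightarrow> real" where
  "blocks_sq n m K z = (\<Sum>i\<in>K. R_sq n m z i)"

definition blocks_odds :: "(nat \<Rightarrow> nat) \<Rightarrow> nat \<Rightarrow> nat set \<Rightarrow> ((nat \<times> nat \<times> nat) \<Rightarrow> real) \<Rightarrow> real" where
  "blocks_odds n m K R = (\<Sum>i\<in>K. R_sq n m R i / (1 - R_sq n m R i))"

definition blocks_jacobian :: "(nat \<Rightarrow> nat) \<Rightarrow> nat \<Rightarrow> real \<Rightarrow> nat set \<Rightarrow> ((nat \<times> nat \<times> nat) \<Rightarrow> real) \<Rightarrow> real" where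
  "blocks_jacobian n m v K R
     = (\<Prod>i\<in>K. indicator {..<1} (R_sq n m R i) * shrink_jacobian v (n i * m) (R_sq n m R i))"

text \<open>The change of variables formula for shrinking every block, quantified over the test function G
  so that it can be proved by induction over the set of blocks.\<close>

definition shrink_blocks_formula :: "(nat \<Rightarrow> nat) \<Rightarrow> nat \<Rightarrow> real \<Rightarrow> nat set \<Rightarrow> bool" where
  "shrink_blocks_formula n m v K \<longleftrightarrow>
    (\<forall>G. (\<lambda>p. G (fst p) (snd p)) \<in> borel_measurable (lborel_pi (block_idx n m K) \<Otimes>\<^sub>M borel)
      \<longrightarrow> (\<forall>R s. 0 \<le> G R s)
      \<longrightarrow> (\<integral>\<^sup>+ z. ennreal (G (shrink_blocks n m v K z) (blocks_sq n m K z)) \<partial>lborel_pi (block_idx n m K))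
        = (\<integral>\<^sup>+ R. ennreal (blocks_jacobian n m v K R * G R (v * blocks_odds n m K R)) \<partial>lborel_pi (block_idx n m K)))"

lemma block_idx_Sigma: "block_idx n m K = Sigma K (\<lambda>i. {..<n i} \<times> {..<m})"
  by (auto simp: block_idx_def)

lemma finite_block_idx: "finite K \<Longrightarrow> finite (block_idx n m K)"
  unfolding block_idx_Sigma by auto

lemma card_block_idx: "finite K \<Longrightarrow> card (block_idx n m K) = (\<Sum>i\<in>K. n i * m)"
  unfolding block_idx_Sigma by (simp add: card_SigmaI card_cartesian_product)

lemma block_idx_Un: "block_idx n m (K1 \<union> K2) = block_idx n m K1 \<union> block_idx n m K2"
  by (auto simp: block_idx_def)

lemma block_idx_disjoint: "K1 \<inter> K2 = {} \<Longrightarrow> block_idx n m K1 \<inter> block_idx n m K2 = {}"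
  by (auto simp: block_idx_def)

lemma sqnorm_block_idx_singleton: "sqnorm (block_idx n m {a}) z = R_sq n m z a"
proof -
  have "sqnorm (block_idx n m {a}) z = (\<Sum>i\<in>{a}. \<Sum>rc\<in>{..<n i} \<times> {..<m}. (z (i, rc))\<^sup>2)"
    unfolding sqnorm_def block_idx_Sigma by (subst sum.Sigma) auto
  then show ?thesis by (simp add: R_sq_def sum.cartesian_product)
qed

lemma R_sq_nonneg: "0 \<le> R_sq n m R i"
  unfolding R_sq_def by (intro sum_nonneg) auto

lemma R_sq_measurable[measurable]:
  "finite K \<Longrightarrow> i \<in> K \<Longrightarrow> (\<lambda>z. R_sq n m z i) \<in> borel_measurable (lborel_pi (block_idx n m K))"
  unfolding R_sq_def by (intro borel_measurable_sum borel_measurable_power measurable_PiM_component_rev)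
    (auto simp: block_idx_def)

lemma blocks_sq_measurable[measurable]:
  "finite K \<Longrightarrow> blocks_sq n m K \<in> borel_measurable (lborel_pi (block_idx n m K))"
  unfolding blocks_sq_def by (intro borel_measurable_sum) auto

lemma blocks_odds_measurable[measurable]:
  "finite K \<Longrightarrow> blocks_odds n m K \<in> borel_measurable (lborel_pi (block_idx n m K))"
  unfolding blocks_odds_def by (intro borel_measurable_sum borel_measurable_divide borel_measurable_diff) auto

lemma blocks_jacobian_measurable[measurable]:
  "finite K \<Longrightarrow> blocks_jacobian n m v K \<in> borel_measurable (lborel_pi (block_idx n m K))"
  unfolding blocks_jacobian_def shrink_jacobian_def by (intro borel_measurable_prod borel_measurable_times) auto

lemma blocks_jacobian_nonneg: "0 \<le> blocks_jacobian n m v K R"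
  unfolding blocks_jacobian_def by (intro prod_nonneg) (auto simp: shrink_jacobian_nonneg)

lemma blocks_jacobian_measurable_param:
  assumes K: "finite K"
  shows "(\<lambda>p. blocks_jacobian n m (fst p) K (snd p)) \<in> borel_measurable (borel \<Otimes>\<^sub>M lborel_pi (block_idx n m K))"
  unfolding blocks_jacobian_def shrink_jacobian_def
proof (intro borel_measurable_prod)
  fix i assume "i \<in> K"
  from measurable_compose[OF measurable_snd R_sq_measurable[OF K this]]
  have [measurable]: "(\<lambda>p. R_sq n m (snd p) i) \<in> borel_measurable (borel \<Otimes>\<^sub>M lborel_pi (block_idx n m K))" .
  show "(\<lambda>p. indicator {..<1} (R_sq n m (snd p) i) * (fst p powr (real (n i * m) / 2)
      * (1 - R_sq n m (snd p) i) powr (- (real (n i * m) / 2) - 1))) \<in> borel_measurable (borel \<Otimes>\<^sub>M lborel_pi (block_idx n m K))"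
    by measurable
qed

lemma shrink_blocks_measurable_param:
  assumes K: "finite K'" "K \<subseteq> K'" and f: "f \<in> borel_measurable (lborel_pi (block_idx n m K'))"
  shows "(\<lambda>z. shrink_blocks n m (f z) K z) \<in> measurable (lborel_pi (block_idx n m K')) (lborel_pi (block_idx n m K))"
  unfolding shrink_blocks_def
proof (rule measurable_restrict)
  fix j assume j: "j \<in> block_idx n m K"
  then obtain i r c where j_eq: "j = (i, r, c)" and i: "i \<in> K'" using K by (auto simp: block_idx_def)
  have [measurable]: "(\<lambda>x. x (i, r, c)) \<in> borel_measurable (lborel_pi (block_idx n m K'))"
    using j j_eq K by (intro measurable_PiM_component_rev) (auto simp: block_idx_def)
  note [measurable] = R_sq_measurable[OF K(1) i] f
  have "(\<lambda>x. x (i, r, c) / sqrt (f x + R_sq n m x i)) \<in> borel_measurable (lborel_pi (block_idx n m K'))"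
    by measurable
  then show "(\<lambda>x. case j of (i, r, c) \<Rightarrow> x (i, r, c) / sqrt (f x + R_sq n m x i))
      \<in> measurable (lborel_pi (block_idx n m K')) lborel"
    by (simp add: j_eq)
qed

lemma shrink_blocks_measurable[measurable]:
  "finite K \<Longrightarrow> shrink_blocks n m v K \<in> measurable (lborel_pi (block_idx n m K)) (lborel_pi (block_idx n m K))"
  using shrink_blocks_measurable_param[where K'=K and K=K and f="\<lambda>_. v"] by simp

lemma shrink_blocks_formula_empty: "shrink_blocks_formula n m v {}"
proof -
  have "shrink_blocks n m v {} z = z" if "z \<in> space (lborel_pi (block_idx n m {}))" for z
    using that by (auto simp: shrink_blocks_def block_idx_def space_PiM PiE_iff extensional_def fun_eq_iff)
  then show ?thesis
    unfolding shrink_blocks_formula_def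
    by (auto intro!: nn_integral_cong simp: blocks_sq_def blocks_jacobian_def blocks_odds_def)
qed

lemma shrink_blocks_formula_singleton:
  assumes v: "v > 0" and a: "1 \<le> n a * m"
  shows "shrink_blocks_formula n m v {a}"
  unfolding shrink_blocks_formula_def
proof (intro allI impI)
  fix G :: "((nat \<times> nat \<times> nat) \<Rightarrow> real) \<Rightarrow> real \<Rightarrow> real"
  assume G: "(\<lambda>p. G (fst p) (snd p)) \<in> borel_measurable (lborel_pi (block_idx n m {a}) \<Otimes>\<^sub>M borel)"
    "\<forall>R s. 0 \<le> G R s"
  let ?I = "block_idx n m {a}"
  have card: "card ?I = n a * m" by (simp add: card_block_idx)
  with a have "?I \<noteq> {}" by auto
  moreover have "shrink ?I v z = shrink_blocks n m v {a} z" for z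
    unfolding shrink_def shrink_blocks_def sqnorm_block_idx_singleton by (auto simp: block_idx_def fun_eq_iff)
  ultimately show "(\<integral>\<^sup>+ z. ennreal (G (shrink_blocks n m v {a} z) (blocks_sq n m {a} z)) \<partial>lborel_pi ?I)
     = (\<integral>\<^sup>+ R. ennreal (blocks_jacobian n m v {a} R * G R (v * blocks_odds n m {a} R)) \<partial>lborel_pi ?I)"
    using nn_integral_shrink[OF finite_block_idx _ v G(1)] G(2)
    by (simp add: sqnorm_block_idx_singleton card blocks_sq_def blocks_jacobian_def blocks_odds_def indicator_def)
qed

context
  fixes n :: "nat \<Rightarrow> nat" and m :: nat and K1 K2 :: "nat set"
  assumes disjoint: "K1 \<inter> K2 = {}"
begin

private abbreviation "merge_blocks \<equiv> merge (block_idx n m K1) (block_idx n m K2)"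

lemma R_sq_merge_blocks1: "i \<in> K1 \<Longrightarrow> R_sq n m (merge_blocks (x, y)) i = R_sq n m x i"
  unfolding R_sq_def by (intro sum.cong refl) (auto simp: merge_def block_idx_def)

lemma R_sq_merge_blocks2: "i \<in> K2 \<Longrightarrow> R_sq n m (merge_blocks (x, y)) i = R_sq n m y i"
  using disjoint unfolding R_sq_def by (intro sum.cong refl) (auto simp: merge_def block_idx_def)

lemma shrink_blocks_merge_blocks:
  "shrink_blocks n m v (K1 \<union> K2) (merge_blocks (x, y))
     = merge_blocks (shrink_blocks n m v K1 x, shrink_blocks n m v K2 y)"
proof
  fix j :: "nat \<times> nat \<times> nat"
  obtain i r c where j: "j = (i, r, c)" by (cases j) auto
  show "shrink_blocks n m v (K1 \<union> K2) (merge_blocks (x, y)) j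
      = merge_blocks (shrink_blocks n m v K1 x, shrink_blocks n m v K2 y) j"
    using disjoint R_sq_merge_blocks1[of i x y] R_sq_merge_blocks2[of i x y]
    by (auto simp: j shrink_blocks_def merge_def block_idx_def)
qed

lemma blocks_sq_merge_blocks:
  "finite K1 \<Longrightarrow> finite K2 \<Longrightarrow>
    blocks_sq n m (K1 \<union> K2) (merge_blocks (x, y)) = blocks_sq n m K1 x + blocks_sq n m K2 y"
  using disjoint unfolding blocks_sq_def
  by (simp add: sum.union_disjoint R_sq_merge_blocks1 R_sq_merge_blocks2 cong: sum.cong)

lemma blocks_odds_merge_blocks:
  "finite K1 \<Longrightarrow> finite K2 \<Longrightarrow>
    blocks_odds n m (K1 \<union> K2) (merge_blocks (x, y)) = blocks_odds n m K1 x + blocks_odds n m K2 y"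
  using disjoint unfolding blocks_odds_def
  by (simp add: sum.union_disjoint R_sq_merge_blocks1 R_sq_merge_blocks2 cong: sum.cong)

lemma blocks_jacobian_merge_blocks:
  "finite K1 \<Longrightarrow> finite K2 \<Longrightarrow>
    blocks_jacobian n m v (K1 \<union> K2) (merge_blocks (x, y)) = blocks_jacobian n m v K1 x * blocks_jacobian n m v K2 y"
  using disjoint unfolding blocks_jacobian_def
  by (simp add: prod.union_disjoint R_sq_merge_blocks1 R_sq_merge_blocks2 cong: prod.cong)

lemma shrink_blocks_merge_blocks2: "shrink_blocks n m v K2 (merge_blocks (x, y)) = shrink_blocks n m v K2 y"
proof
  fix j :: "nat \<times> nat \<times> nat"
  obtain i r c where j: "j = (i, r, c)" by (cases j) auto
  show "shrink_blocks n m v K2 (merge_blocks (x, y)) j = shrink_blocks n m v K2 y j"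
    using disjoint R_sq_merge_blocks2[of i x y] by (auto simp: j shrink_blocks_def merge_def block_idx_def)
qed

lemma shrink_blocks_formula_Un:
  assumes K: "finite K1" "finite K2"
    and formula1: "shrink_blocks_formula n m v K1" and formula2: "shrink_blocks_formula n m v K2"
  shows "shrink_blocks_formula n m v (K1 \<union> K2)"
  unfolding shrink_blocks_formula_def
proof (intro allI impI)
  define A where "A = block_idx n m K1"
  define B where "B = block_idx n m K2"
  have AB: "A \<inter> B = {}" "finite A" "finite B" "block_idx n m (K1 \<union> K2) = A \<union> B"
    using K disjoint by (auto simp: A_def B_def block_idx_disjoint finite_block_idx block_idx_Un)
  fix G :: "((nat \<times> nat \<times> nat) \<Rightarrow> real) \<Rightarrow> real \<Rightarrow> real"
  assume G_measurable: "(\<lambda>p. G (fst p) (snd p)) \<in> borel_measurable (lborel_pi (block_idx n m (K1 \<union> K2)) \<Otimes>\<^sub>M borel)"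
    and G_nonneg: "\<forall>R s. 0 \<le> G R s"
  note G = measurable_curry_compose[OF G_measurable[unfolded AB(4)]]
  interpret pair_sigma_finite "lborel_pi A" "lborel_pi B"
    using AB by (intro pair_sigma_finite.intro lborel_prod.sigma_finite) auto
  have [measurable]: "shrink_blocks n m v K1 \<in> measurable (lborel_pi A) (lborel_pi A)"
    "shrink_blocks n m v K2 \<in> measurable (lborel_pi B) (lborel_pi B)"
    "blocks_sq n m K1 \<in> borel_measurable (lborel_pi A)" "blocks_sq n m K2 \<in> borel_measurable (lborel_pi B)"
    "blocks_odds n m K1 \<in> borel_measurable (lborel_pi A)" "blocks_odds n m K2 \<in> borel_measurable (lborel_pi B)"
    "blocks_jacobian n m v K1 \<in> borel_measurable (lborel_pi A)"
    "blocks_jacobian n m v K2 \<in> borel_measurable (lborel_pi B)"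
    using K by (simp_all add: A_def B_def)
  define \<Phi> where "\<Phi> p = ennreal (blocks_jacobian n m v K2 (snd p)
      * G (merge A B (shrink_blocks n m v K1 (fst p), snd p)) (blocks_sq n m K1 (fst p) + v * blocks_odds n m K2 (snd p)))"
    for p
  define \<Psi> where "\<Psi> p = ennreal (blocks_jacobian n m v K1 (fst p) * (blocks_jacobian n m v K2 (snd p)
      * G (merge A B (fst p, snd p)) (v * blocks_odds n m K1 (fst p) + v * blocks_odds n m K2 (snd p))))" for p
  have "(\<lambda>p. G (merge A B (shrink_blocks n m v K1 (fst p), snd p)) (blocks_sq n m K1 (fst p) + v * blocks_odds n m K2 (snd p)))
      \<in> borel_measurable (lborel_pi A \<Otimes>\<^sub>M lborel_pi B)"
    by (rule G) measurable
  then have \<Phi>_measurable: "\<Phi> \<in> borel_measurable (lborel_pi A \<Otimes>\<^sub>M lborel_pi B)"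
    unfolding \<Phi>_def by measurable
  have "(\<lambda>p. G (merge A B (fst p, snd p)) (v * blocks_odds n m K1 (fst p) + v * blocks_odds n m K2 (snd p)))
      \<in> borel_measurable (lborel_pi A \<Otimes>\<^sub>M lborel_pi B)"
    by (rule G) measurable
  then have \<Psi>_measurable: "\<Psi> \<in> borel_measurable (lborel_pi A \<Otimes>\<^sub>M lborel_pi B)"
    unfolding \<Psi>_def by measurable
  have "(\<lambda>z. G (shrink_blocks n m v (K1 \<union> K2) z) (blocks_sq n m (K1 \<union> K2) z)) \<in> borel_measurable (lborel_pi (A \<union> B))"
    using K by (intro G) (auto simp flip: AB(4))
  then have lhs_measurable:
    "(\<lambda>z. ennreal (G (shrink_blocks n m v (K1 \<union> K2) z) (blocks_sq n m (K1 \<union> K2) z))) \<in> borel_measurable (lborel_pi (A \<union> B))"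
    by measurable
  have "(\<lambda>z. G z (v * blocks_odds n m (K1 \<union> K2) z)) \<in> borel_measurable (lborel_pi (A \<union> B))"
    using K by (intro G) (auto simp flip: AB(4))
  moreover have "blocks_jacobian n m v (K1 \<union> K2) \<in> borel_measurable (lborel_pi (A \<union> B))"
    using K by (simp flip: AB(4))
  ultimately have rhs_measurable: "(\<lambda>z. ennreal (blocks_jacobian n m v (K1 \<union> K2) z
      * G z (v * blocks_odds n m (K1 \<union> K2) z))) \<in> borel_measurable (lborel_pi (A \<union> B))"
    by measurable
  have "(\<integral>\<^sup>+ z. ennreal (G (shrink_blocks n m v (K1 \<union> K2) z) (blocks_sq n m (K1 \<union> K2) z)) \<partial>lborel_pi (A \<union> B))
      = (\<integral>\<^sup>+ x. \<integral>\<^sup>+ y. ennreal (G (shrink_blocks n m v (K1 \<union> K2) (merge A B (x, y)))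
          (blocks_sq n m (K1 \<union> K2) (merge A B (x, y)))) \<partial>lborel_pi B \<partial>lborel_pi A)"
    using AB lhs_measurable by (intro lborel_prod.product_nn_integral_fold) auto
  also have "\<dots> = (\<integral>\<^sup>+ x. \<integral>\<^sup>+ y. \<Phi> (x, y) \<partial>lborel_pi B \<partial>lborel_pi A)"
  proof (rule nn_integral_cong)
    fix x assume x: "x \<in> space (lborel_pi A)"
    define Gx where "Gx R s = G (merge A B (shrink_blocks n m v K1 x, R)) (blocks_sq n m K1 x + s)" for R s
    have "shrink_blocks n m v K1 x \<in> space (lborel_pi A)"
      by (rule measurable_space[OF _ x]) measurable
    then have [measurable]: "(\<lambda>R. merge A B (shrink_blocks n m v K1 x, R)) \<in> measurable (lborel_pi B) (lborel_pi (A \<union> B))"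
      by measurable
    have Gx_measurable: "(\<lambda>p. Gx (fst p) (snd p)) \<in> borel_measurable (lborel_pi B \<Otimes>\<^sub>M borel)"
      unfolding Gx_def by (rule G) measurable
    have Gx_nonneg: "0 \<le> Gx R s" for R s
      unfolding Gx_def using G_nonneg by simp
    have "(\<integral>\<^sup>+ y. ennreal (G (shrink_blocks n m v (K1 \<union> K2) (merge A B (x, y)))
          (blocks_sq n m (K1 \<union> K2) (merge A B (x, y)))) \<partial>lborel_pi B)
        = (\<integral>\<^sup>+ y. ennreal (Gx (shrink_blocks n m v K2 y) (blocks_sq n m K2 y)) \<partial>lborel_pi B)"
      unfolding Gx_def A_def B_def using K by (simp add: shrink_blocks_merge_blocks blocks_sq_merge_blocks)
    also have "\<dots> = (\<integral>\<^sup>+ y. ennreal (blocks_jacobian n m v K2 y * Gx y (v * blocks_odds n m K2 y)) \<partial>lborel_pi B)"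
      by (rule formula2[unfolded shrink_blocks_formula_def, folded B_def, rule_format, OF Gx_measurable Gx_nonneg])
    also have "\<dots> = (\<integral>\<^sup>+ y. \<Phi> (x, y) \<partial>lborel_pi B)"
      unfolding \<Phi>_def Gx_def by simp
    finally show "(\<integral>\<^sup>+ y. ennreal (G (shrink_blocks n m v (K1 \<union> K2) (merge A B (x, y)))
          (blocks_sq n m (K1 \<union> K2) (merge A B (x, y)))) \<partial>lborel_pi B) = (\<integral>\<^sup>+ y. \<Phi> (x, y) \<partial>lborel_pi B)" .
  qed
  also have "\<dots> = (\<integral>\<^sup>+ y. \<integral>\<^sup>+ x. \<Phi> (x, y) \<partial>lborel_pi A \<partial>lborel_pi B)"
    by (rule Fubini[OF \<Phi>_measurable, symmetric])
  also have "\<dots> = (\<integral>\<^sup>+ y. \<integral>\<^sup>+ x. \<Psi> (x, y) \<partial>lborel_pi A \<partial>lborel_pi B)"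
  proof (rule nn_integral_cong)
    fix y assume y: "y \<in> space (lborel_pi B)"
    define Gy where "Gy R s = blocks_jacobian n m v K2 y * G (merge A B (R, y)) (s + v * blocks_odds n m K2 y)" for R s
    have [measurable]: "(\<lambda>R. merge A B (R, y)) \<in> measurable (lborel_pi A) (lborel_pi (A \<union> B))"
      using y by measurable
    have "(\<lambda>p. G (merge A B (fst p, y)) (snd p + v * blocks_odds n m K2 y)) \<in> borel_measurable (lborel_pi A \<Otimes>\<^sub>M borel)"
      by (rule G) measurable
    then have Gy_measurable: "(\<lambda>p. Gy (fst p) (snd p)) \<in> borel_measurable (lborel_pi A \<Otimes>\<^sub>M borel)"
      unfolding Gy_def by measurable
    have Gy_nonneg: "0 \<le> Gy R s" for R s
      unfolding Gy_def using G_nonneg blocks_jacobian_nonneg by (simp add: mult_nonneg_nonneg)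
    have "(\<integral>\<^sup>+ x. ennreal (Gy (shrink_blocks n m v K1 x) (blocks_sq n m K1 x)) \<partial>lborel_pi A)
        = (\<integral>\<^sup>+ x. ennreal (blocks_jacobian n m v K1 x * Gy x (v * blocks_odds n m K1 x)) \<partial>lborel_pi A)"
      by (rule formula1[unfolded shrink_blocks_formula_def, folded A_def, rule_format, OF Gy_measurable Gy_nonneg])
    then show "(\<integral>\<^sup>+ x. \<Phi> (x, y) \<partial>lborel_pi A) = (\<integral>\<^sup>+ x. \<Psi> (x, y) \<partial>lborel_pi A)"
      unfolding \<Phi>_def \<Psi>_def Gy_def by simp
  qed
  also have "\<dots> = (\<integral>\<^sup>+ x. \<integral>\<^sup>+ y. \<Psi> (x, y) \<partial>lborel_pi B \<partial>lborel_pi A)"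
    by (rule Fubini[OF \<Psi>_measurable])
  also have "\<dots> = (\<integral>\<^sup>+ x. \<integral>\<^sup>+ y. ennreal (blocks_jacobian n m v (K1 \<union> K2) (merge A B (x, y))
      * G (merge A B (x, y)) (v * blocks_odds n m (K1 \<union> K2) (merge A B (x, y)))) \<partial>lborel_pi B \<partial>lborel_pi A)"
    unfolding \<Psi>_def A_def B_def using K
    by (simp add: blocks_jacobian_merge_blocks blocks_odds_merge_blocks distrib_left mult.assoc)
  also have "\<dots> = (\<integral>\<^sup>+ z. ennreal (blocks_jacobian n m v (K1 \<union> K2) z
      * G z (v * blocks_odds n m (K1 \<union> K2) z)) \<partial>lborel_pi (A \<union> B))"
    using AB rhs_measurable by (intro lborel_prod.product_nn_integral_fold[symmetric]) auto
  finally show "(\<integral>\<^sup>+ z. ennreal (G (shrink_blocks n m v (K1 \<union> K2) z) (blocks_sq n m (K1 \<union> K2) z))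
      \<partial>lborel_pi (block_idx n m (K1 \<union> K2)))
    = (\<integral>\<^sup>+ R. ennreal (blocks_jacobian n m v (K1 \<union> K2) R * G R (v * blocks_odds n m (K1 \<union> K2) R))
      \<partial>lborel_pi (block_idx n m (K1 \<union> K2)))"
    unfolding AB(4) .
qed

end

lemma shrink_blocks_formula_finite:
  assumes K: "finite K" and v: "v > 0" and nonempty: "\<And>i. i \<in> K \<Longrightarrow> 1 \<le> n i * m"
  shows "shrink_blocks_formula n m v K"
  using K nonempty
proof (induction K rule: finite_induct)
  case empty
  show ?case by (rule shrink_blocks_formula_empty)
next
  case (insert a K)
  then have "shrink_blocks_formula n m v ({a} \<union> K)"
    by (intro shrink_blocks_formula_Un shrink_blocks_formula_singleton v) auto
  then show ?case by simp
qed

section \<open>Matrices as block vectors\<close>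

lemma distr_lborel_pi_reindex:
  fixes f :: "'a \<Rightarrow> 'b" and I :: "'a set" and J :: "'b set"
  assumes I: "finite I" and f: "bij_betw f I J"
  shows "distr (lborel_pi J) (lborel_pi I) (\<lambda>\<omega>. restrict (\<lambda>i. \<omega> (f i)) I) = lborel_pi I"
proof (rule lborel_prod.PiM_eqI[OF I])
  have J: "finite J" using f I bij_betw_finite by blast
  show "sets (distr (lborel_pi J) (lborel_pi I) (\<lambda>\<omega>. restrict (\<lambda>i. \<omega> (f i)) I)) = sets (lborel_pi I)" by simp
  fix A :: "'a \<Rightarrow> real set" assume A: "\<And>i. i \<in> I \<Longrightarrow> A i \<in> sets lborel"
  define g where "g = the_inv_into I f"
  have fg: "f (g j) = j" and gI: "g j \<in> I" if "j \<in> J" for j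
    using f that unfolding g_def by (auto simp: bij_betw_def f_the_inv_into_f intro: the_inv_into_into)
  have gf: "g (f i) = i" and fJ: "f i \<in> J" if "i \<in> I" for i
    using f that unfolding g_def by (auto simp: bij_betw_def the_inv_into_f_f)
  have measurable: "(\<lambda>\<omega>. restrict (\<lambda>i. \<omega> (f i)) I) \<in> measurable (lborel_pi J) (lborel_pi I)"
    by (rule measurable_restrict) (use fJ in auto)
  have "(\<lambda>\<omega>. restrict (\<lambda>i. \<omega> (f i)) I) -` Pi\<^sub>E I A \<inter> space (lborel_pi J) = Pi\<^sub>E J (\<lambda>j. A (g j))"
    using fg gI gf fJ by (auto simp: space_PiM PiE_iff Pi_iff extensional_def) (metis gf)+
  then have "emeasure (distr (lborel_pi J) (lborel_pi I) (\<lambda>\<omega>. restrict (\<lambda>i. \<omega> (f i)) I)) (Pi\<^sub>E I A)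
      = emeasure (lborel_pi J) (Pi\<^sub>E J (\<lambda>j. A (g j)))"
    using A I by (subst emeasure_distr[OF measurable]) (auto intro!: sets_PiM_I_finite)
  also have "\<dots> = (\<Prod>j\<in>J. emeasure lborel (A (g j)))"
    using A gI J by (subst lborel_prod.emeasure_PiM) auto
  also have "\<dots> = (\<Prod>i\<in>I. emeasure lborel (A i))"
    using f gf by (subst prod.reindex_bij_betw[OF f, symmetric]) (auto intro!: prod.cong)
  finally show "emeasure (distr (lborel_pi J) (lborel_pi I) (\<lambda>\<omega>. restrict (\<lambda>i. \<omega> (f i)) I)) (Pi\<^sub>E I A)
      = (\<Prod>i\<in>I. emeasure lborel (A i))" .
qed

lemma row_off_Suc: "row_off n (Suc i) = row_off n i + n i"
  by (simp add: row_off_def)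

lemma row_off_mono: "i < i' \<Longrightarrow> row_off n i + n i \<le> row_off n i'"
proof (induction i' arbitrary: i)
  case (Suc i')
  then show ?case
    by (cases "i = i'") (auto simp: row_off_Suc intro: le_trans[OF Suc.IH])
qed simp

definition block_row :: "(nat \<Rightarrow> nat) \<Rightarrow> nat \<times> nat \<times> nat \<Rightarrow> nat \<times> nat" where
  "block_row n = (\<lambda>(i, r, c). (row_off n i + r, c))"

lemma bij_betw_block_row: "bij_betw (block_row n) (block_idx n m {..k}) (mat_idx (\<Sum>i\<le>k. n i) m)"
proof -
  have "inj_on (block_row n) (block_idx n m {..k})"
  proof (rule inj_onI)
    fix x y assume "x \<in> block_idx n m {..k}" "y \<in> block_idx n m {..k}" and eq: "block_row n x = block_row n y"
    then obtain i r c i' r' c' where xy: "x = (i, r, c)" "y = (i', r', c')" "r < n i" "r' < n i'"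
      by (auto simp: block_idx_def)
    with eq have rows: "row_off n i + r = row_off n i' + r'" and "c = c'" by (auto simp: block_row_def)
    moreover have "i = i'"
      using row_off_mono[of i i' n] row_off_mono[of i' i n] rows xy by (cases i i' rule: linorder_cases) auto
    ultimately show "x = y" using xy by simp
  qed
  moreover have "block_row n ` block_idx n m {..k} \<subseteq> mat_idx (\<Sum>i\<le>k. n i) m"
  proof
    fix p assume "p \<in> block_row n ` block_idx n m {..k}"
    then obtain i r c where p: "p = (row_off n i + r, c)" "i \<le> k" "r < n i" "c < m"
      by (auto simp: block_idx_def block_row_def)
    have "row_off n i + n i \<le> row_off n (Suc k)"
      using row_off_mono[of i "Suc k" n] p(2) by simp
    also have "row_off n (Suc k) = (\<Sum>i\<le>k. n i)" by (simp add: row_off_def lessThan_Suc_atMost)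
    finally show "p \<in> mat_idx (\<Sum>i\<le>k. n i) m" using p by (auto simp: mat_idx_def)
  qed
  moreover have "card (block_idx n m {..k}) = card (mat_idx (\<Sum>i\<le>k. n i) m)"
    by (simp add: card_block_idx mat_idx_def card_cartesian_product sum_distrib_right)
  ultimately show ?thesis
    by (metis bij_betw_def card_image card_subset_eq finite_SigmaI finite_lessThan mat_idx_def)
qed

definition to_blocks :: "(nat \<Rightarrow> nat) \<Rightarrow> nat \<Rightarrow> nat \<Rightarrow> ((nat \<times> nat) \<Rightarrow> real) \<Rightarrow> ((nat \<times> nat \<times> nat) \<Rightarrow> real)" where
  "to_blocks n m k X = restrict (\<lambda>j. X (block_row n j)) (block_idx n m {..k})"

lemma to_blocks_measurable[measurable]:
  "to_blocks n m k \<in> measurable (mat_lebesgue (\<Sum>i\<le>k. n i) m) (lborel_pi (block_idx n m {..k}))"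
  unfolding to_blocks_def mat_lebesgue_def
  by (rule measurable_restrict) (use bij_betwE[OF bij_betw_block_row] in auto)

lemma distr_to_blocks:
  "distr (mat_lebesgue (\<Sum>i\<le>k. n i) m) (lborel_pi (block_idx n m {..k})) (to_blocks n m k)
     = lborel_pi (block_idx n m {..k})"
  unfolding to_blocks_def mat_lebesgue_def
  by (rule distr_lborel_pi_reindex[OF finite_block_idx bij_betw_block_row]) simp

lemma R_sq_to_blocks: "i \<le> k \<Longrightarrow> R_sq n m (to_blocks n m k X) i = blk_sq n m i X"
  unfolding R_sq_def blk_sq_def to_blocks_def by (intro sum.cong refl) (auto simp: block_idx_def block_row_def)

lemma V_stat_to_blocks: "V_stat n m X = R_sq n m (to_blocks n m k X) 0"
  by (simp add: V_stat_def R_sq_to_blocks)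

lemma R_idx_eq: "R_idx k n m = block_idx n m {1..k}"
  by (simp add: R_idx_def block_idx_def)

lemma R_stat_to_blocks: "R_stat k n m X = shrink_blocks n m (V_stat n m X) {1..k} (to_blocks n m k X)"
proof
  fix j :: "nat \<times> nat \<times> nat"
  obtain i r c where j: "j = (i, r, c)" by (cases j) auto
  show "R_stat k n m X j = shrink_blocks n m (V_stat n m X) {1..k} (to_blocks n m k X) j"
  proof (cases "j \<in> block_idx n m {1..k}")
    case True
    then have "i \<le> k" "to_blocks n m k X (i, r, c) = X (row_off n i + r, c)"
      by (auto simp: j block_idx_def to_blocks_def block_row_def)
    with True show ?thesis
      by (simp add: j R_stat_def R_idx_eq shrink_blocks_def R_sq_to_blocks)
  qed (simp add: R_stat_def R_idx_eq shrink_blocks_def)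
qed

lemma frob_sq_to_blocks: "frob_sq (\<Sum>i\<le>k. n i) m X = (\<Sum>i\<le>k. R_sq n m (to_blocks n m k X) i)"
proof -
  have "frob_sq (\<Sum>i\<le>k. n i) m X = (\<Sum>j\<in>block_idx n m {..k}. (X (block_row n j))\<^sup>2)"
    unfolding frob_sq_def using sum.reindex_bij_betw[OF bij_betw_block_row, of "\<lambda>p. (X p)\<^sup>2"] by simp
  also have "\<dots> = (\<Sum>i\<le>k. \<Sum>rc\<in>{..<n i} \<times> {..<m}. (X (block_row n (i, rc)))\<^sup>2)"
    unfolding block_idx_Sigma by (subst sum.Sigma) auto
  also have "\<dots> = (\<Sum>i\<le>k. \<Sum>r<n i. \<Sum>c<m. (X (block_row n (i, r, c)))\<^sup>2)"
    by (simp add: sum.cartesian_product)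
  also have "\<dots> = (\<Sum>i\<le>k. R_sq n m (to_blocks n m k X) i)"
    unfolding R_sq_def to_blocks_def by (intro sum.cong refl) (auto simp: block_idx_def)
  finally show ?thesis .
qed

lemma R_lebesgue_eq: "R_lebesgue k n m = lborel_pi (block_idx n m {1..k})"
  by (simp add: R_lebesgue_def R_idx_eq)

lemma V_R_stat_blocks_measurable:
  "(\<lambda>z. (R_sq n m z 0, shrink_blocks n m (R_sq n m z 0) {1..k} z))
     \<in> measurable (lborel_pi (block_idx n m {..k})) (lborel \<Otimes>\<^sub>M R_lebesgue k n m)"
proof -
  have [measurable]: "(\<lambda>z. R_sq n m z 0) \<in> borel_measurable (lborel_pi (block_idx n m {..k}))"
    by (intro R_sq_measurable) auto
  have [measurable]: "(\<lambda>z. shrink_blocks n m (R_sq n m z 0) {1..k} z)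
      \<in> measurable (lborel_pi (block_idx n m {..k})) (lborel_pi (block_idx n m {1..k}))"
    by (rule shrink_blocks_measurable_param) auto
  show ?thesis unfolding R_lebesgue_eq by measurable
qed

lemma V_R_stat_measurable:
  "(\<lambda>X. (V_stat n m X, R_stat k n m X))
     \<in> measurable (mat_lebesgue (\<Sum>i\<le>k. n i) m) (lborel \<Otimes>\<^sub>M R_lebesgue k n m)"
  using measurable_compose[OF to_blocks_measurable V_R_stat_blocks_measurable]
  by (simp add: R_stat_to_blocks V_stat_to_blocks[of n m _ k])

section \<open>Joint density of V and the R_i\<close>

text \<open>The density generator only matters on [0, \<infinity>); extending it constantly to the left makes it
  Borel measurable on the whole line.\<close>

definition generator_ext :: "(real \<Rightarrow> real) \<Rightarrow> real \<Rightarrow> real" where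
  "generator_ext h t = h (max t 0)"

lemma generator_ext_measurable:
  assumes "h \<in> borel_measurable (restrict_space borel {0..})"
  shows "generator_ext h \<in> borel_measurable borel"
proof -
  have "(\<lambda>t::real. max t 0) \<in> measurable borel (restrict_space borel {0..})"
    by (rule measurable_restrict_space2) auto
  from measurable_comp[OF this assms] show ?thesis by (simp add: generator_ext_def[abs_def] o_def)
qed

lemma generator_ext_frob_sq: "generator_ext h (frob_sq N m X) = h (frob_sq N m X)"
  unfolding generator_ext_def by (simp add: frob_sq_def sum_nonneg max_absorb1)

lemma spherical_dist_generator_ext:
  "spherical_dist N m h = density (mat_lebesgue N m) (\<lambda>X. ennreal (generator_ext h (frob_sq N m X)))"
  by (simp add: spherical_dist_def generator_ext_frob_sq)

lemma generator_ext_frob_sq_measurable: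
  assumes [measurable]: "generator_ext h \<in> borel_measurable borel"
  shows "(\<lambda>X. ennreal (generator_ext h (frob_sq N m X))) \<in> borel_measurable (mat_lebesgue N m)"
  unfolding frob_sq_def mat_lebesgue_def by measurable

definition joint_density ::
  "nat \<Rightarrow> (nat \<Rightarrow> nat) \<Rightarrow> nat \<Rightarrow> nat \<Rightarrow> (real \<Rightarrow> real) \<Rightarrow> real \<times> ((nat \<times> nat \<times> nat) \<Rightarrow> real) \<Rightarrow> real" where
  "joint_density N n m k h = (\<lambda>(v, R).
     indicator {(v, R). v > 0 \<and> (\<forall>i\<in>{1..k}. R_sq n m R i < 1)} (v, R)
     * (radial_const (n 0 * m) * v powr (real (N * m) / 2 - 1) * generator_ext h (v * (1 + blocks_odds n m {1..k} R))
        * (\<Prod>i\<in>{1..k}. (1 - R_sq n m R i) powr (- (real (n i * m) / 2) - 1))))"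

lemma joint_density_measurable:
  assumes [measurable]: "generator_ext h \<in> borel_measurable borel"
  shows "joint_density N n m k h \<in> borel_measurable (lborel \<Otimes>\<^sub>M lborel_pi (block_idx n m {1..k}))"
proof -
  have [measurable]: "(\<lambda>p. R_sq n m (snd p) i) \<in> borel_measurable (lborel \<Otimes>\<^sub>M lborel_pi (block_idx n m {1..k}))"
    if "i \<in> {1..k}" for i
    using that by (intro measurable_compose[OF measurable_snd R_sq_measurable]) auto
  have [measurable]: "(\<lambda>p. blocks_odds n m {1..k} (snd p)) \<in> borel_measurable (lborel \<Otimes>\<^sub>M lborel_pi (block_idx n m {1..k}))"
    by (intro measurable_compose[OF measurable_snd blocks_odds_measurable]) auto
  show ?thesis
    unfolding joint_density_def case_prod_beta' by measurable
qed

lemma nn_integral_to_blocks: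
  assumes "f \<in> borel_measurable (lborel_pi (block_idx n m {..k}))"
  shows "(\<integral>\<^sup>+ X. f (to_blocks n m k X) \<partial>mat_lebesgue (\<Sum>i\<le>k. n i) m) = (\<integral>\<^sup>+ z. f z \<partial>lborel_pi (block_idx n m {..k}))"
proof -
  have "(\<integral>\<^sup>+ z. f z \<partial>lborel_pi (block_idx n m {..k}))
      = (\<integral>\<^sup>+ z. f z \<partial>distr (mat_lebesgue (\<Sum>i\<le>k. n i) m) (lborel_pi (block_idx n m {..k})) (to_blocks n m k))"
    by (simp only: distr_to_blocks)
  then show ?thesis using assms by (simp add: nn_integral_distr)
qed

lemma block_idx_atMost_split: "block_idx n m {..k} = block_idx n m {0} \<union> block_idx n m {1..k}"
  by (auto simp: block_idx_def)

lemma R_sq_merge_block0: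
  "R_sq n m (merge (block_idx n m {0}) (block_idx n m {1..k}) (x, z)) 0 = sqnorm (block_idx n m {0}) x"
  using R_sq_merge_blocks1[of "{0}" "{1..k}"] by (simp add: sqnorm_block_idx_singleton)

lemma shrink_blocks_merge_block0:
  "shrink_blocks n m v {1..k} (merge (block_idx n m {0}) (block_idx n m {1..k}) (x, z)) = shrink_blocks n m v {1..k} z"
  by (rule shrink_blocks_merge_blocks2) auto

lemma sum_R_sq_merge_block0:
  "(\<Sum>i\<le>k. R_sq n m (merge (block_idx n m {0}) (block_idx n m {1..k}) (x, z)) i)
     = sqnorm (block_idx n m {0}) x + blocks_sq n m {1..k} z"
proof -
  have "{..k} = insert 0 {1..k}" by auto
  then have "(\<Sum>i\<le>k. R_sq n m (merge (block_idx n m {0}) (block_idx n m {1..k}) (x, z)) i)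
      = R_sq n m (merge (block_idx n m {0}) (block_idx n m {1..k}) (x, z)) 0
        + (\<Sum>i\<in>{1..k}. R_sq n m (merge (block_idx n m {0}) (block_idx n m {1..k}) (x, z)) i)"
    by simp
  also have "(\<Sum>i\<in>{1..k}. R_sq n m (merge (block_idx n m {0}) (block_idx n m {1..k}) (x, z)) i)
      = blocks_sq n m {1..k} z"
    unfolding blocks_sq_def by (intro sum.cong refl R_sq_merge_blocks2) auto
  finally show ?thesis by (simp only: R_sq_merge_block0)
qed

lemma nn_integral_shrink_blocks_given_block0:
  fixes F :: "real \<times> ((nat \<times> nat \<times> nat) \<Rightarrow> real) \<Rightarrow> real"
  assumes s: "s > 0" and blocks: "\<And>i. i \<in> {1..k} \<Longrightarrow> 1 \<le> n i * m"
    and F: "F \<in> borel_measurable (lborel \<Otimes>\<^sub>M lborel_pi (block_idx n m {1..k}))" "\<And>p. 0 \<le> F p"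
    and g: "g \<in> borel_measurable borel" "\<And>t. 0 \<le> g t"
  shows "(\<integral>\<^sup>+ z. ennreal (F (s, shrink_blocks n m s {1..k} z) * g (s + blocks_sq n m {1..k} z))
            \<partial>lborel_pi (block_idx n m {1..k}))
       = (\<integral>\<^sup>+ z. ennreal (blocks_jacobian n m s {1..k} z * (F (s, z) * g (s + s * blocks_odds n m {1..k} z)))
            \<partial>lborel_pi (block_idx n m {1..k}))"
proof -
  have "(\<lambda>p. (s, fst p)) \<in> measurable (lborel_pi (block_idx n m {1..k}) \<Otimes>\<^sub>M borel) (lborel \<Otimes>\<^sub>M lborel_pi (block_idx n m {1..k}))"
    by measurable
  from measurable_compose[OF this F(1)]
  have "(\<lambda>p. F (s, fst p) * g (s + snd p)) \<in> borel_measurable (lborel_pi (block_idx n m {1..k}) \<Otimes>\<^sub>M borel)"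
    using g(1) by measurable
  moreover have "shrink_blocks_formula n m s {1..k}"
    using s blocks by (intro shrink_blocks_formula_finite) auto
  ultimately show ?thesis
    using F(2) g(2) unfolding shrink_blocks_formula_def
    by (auto elim!: allE[of _ "\<lambda>R t. F (s, R) * g (s + t)"])
qed

lemma radial_factor_blocks_jacobian:
  fixes u :: real and z :: "(nat \<times> nat \<times> nat) \<Rightarrow> real"
  assumes N: "N = (\<Sum>i\<le>k. n i)"
  shows "indicator {0<..} u * radial_const (n 0 * m) * u powr (real (n 0 * m) / 2 - 1)
           * (blocks_jacobian n m u {1..k} z * (c * generator_ext h (u + u * blocks_odds n m {1..k} z)))
       = c * joint_density N n m k h (u, z)"
proof (cases "u > 0 \<and> (\<forall>i\<in>{1..k}. R_sq n m z i < 1)")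
  case False
  then consider "\<not> u > 0" | i where "i \<in> {1..k}" "\<not> R_sq n m z i < 1" by auto
  then show ?thesis
  proof cases
    case 2
    then have "blocks_jacobian n m u {1..k} z = 0"
      unfolding blocks_jacobian_def by (intro prod_zero) (auto intro!: bexI[of _ i])
    then show ?thesis using 2 by (auto simp: joint_density_def indicator_def)
  qed (simp add: joint_density_def)
next
  case True
  then have u: "u > 0" and R: "\<forall>i\<in>{1..k}. R_sq n m z i < 1" by auto
  have "blocks_jacobian n m u {1..k} z
      = (\<Prod>i\<in>{1..k}. u powr (real (n i * m) / 2) * (1 - R_sq n m z i) powr (- (real (n i * m) / 2) - 1))"
    unfolding blocks_jacobian_def shrink_jacobian_def using R by (intro prod.cong) auto
  also have "\<dots> = u powr (\<Sum>i\<in>{1..k}. real (n i * m) / 2)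
      * (\<Prod>i\<in>{1..k}. (1 - R_sq n m z i) powr (- (real (n i * m) / 2) - 1))"
    using u by (simp add: prod.distrib powr_sum)
  finally have jacobian: "blocks_jacobian n m u {1..k} z = \<dots>" .
  have "real (N * m) = real (n 0 * m) + (\<Sum>i\<in>{1..k}. real (n i * m))"
  proof -
    have "{..k} = insert 0 {1..k}" by auto
    then show ?thesis unfolding N by (simp add: sum_distrib_right distrib_right)
  qed
  then have "real (n 0 * m) / 2 - 1 + (\<Sum>i\<in>{1..k}. real (n i * m) / 2) = real (N * m) / 2 - 1"
    by (simp add: sum_divide_distrib[symmetric])
  then have "u powr (real (n 0 * m) / 2 - 1) * u powr (\<Sum>i\<in>{1..k}. real (n i * m) / 2) = u powr (real (N * m) / 2 - 1)"
    by (simp only: powr_add[symmetric])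
  then show ?thesis
    using True unfolding joint_density_def jacobian
    by (simp add: indicator_def algebra_simps)
qed

lemma nn_integral_shrunk_blocks_measurable:
  fixes F :: "real \<times> ((nat \<times> nat \<times> nat) \<Rightarrow> real) \<Rightarrow> real"
  assumes F: "F \<in> borel_measurable (lborel \<Otimes>\<^sub>M R_lebesgue k n m)" and g: "g \<in> borel_measurable borel"
  shows "(\<lambda>u. \<integral>\<^sup>+ z. ennreal (blocks_jacobian n m u {1..k} z * (F (u, z) * g (u + u * blocks_odds n m {1..k} z)))
      \<partial>R_lebesgue k n m) \<in> borel_measurable borel"
proof -
  let ?IR = "block_idx n m {1..k}"
  interpret sigma_finite_measure "lborel_pi ?IR"
    by (rule lborel_prod.sigma_finite) (simp add: finite_block_idx)
  have "sets (lborel \<Otimes>\<^sub>M lborel_pi ?IR) = sets (borel \<Otimes>\<^sub>M lborel_pi ?IR)"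
    by (rule sets_pair_measure_cong) simp_all
  from measurable_cong_sets[OF this refl, of borel] F
  have [measurable]: "F \<in> borel_measurable (borel \<Otimes>\<^sub>M lborel_pi ?IR)"
    by (simp add: R_lebesgue_eq)
  have [measurable]: "(\<lambda>p. blocks_odds n m {1..k} (snd p)) \<in> borel_measurable (borel \<Otimes>\<^sub>M lborel_pi ?IR)"
    by (rule measurable_compose[OF measurable_snd blocks_odds_measurable]) simp
  note [measurable] = g blocks_jacobian_measurable_param[OF finite_atLeastAtMost, of n m 1 k]
  have "(\<lambda>p. ennreal (blocks_jacobian n m (fst p) {1..k} (snd p)
      * (F p * g (fst p + fst p * blocks_odds n m {1..k} (snd p))))) \<in> borel_measurable (borel \<Otimes>\<^sub>M lborel_pi ?IR)"
    by measurable
  from borel_measurable_nn_integral_fst[OF this] show ?thesis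
    by (simp add: R_lebesgue_eq)
qed

theorem nn_integral_V_R_stat:
  fixes F :: "real \<times> ((nat \<times> nat \<times> nat) \<Rightarrow> real) \<Rightarrow> real"
  assumes blocks: "\<And>i. i \<le> k \<Longrightarrow> 1 \<le> n i * m" and N: "N = (\<Sum>i\<le>k. n i)"
    and h: "generator_ext h \<in> borel_measurable borel" "\<And>t. 0 \<le> generator_ext h t"
    and F: "F \<in> borel_measurable (lborel \<Otimes>\<^sub>M R_lebesgue k n m)" "\<And>p. 0 \<le> F p"
  shows "(\<integral>\<^sup>+ X. ennreal (F (V_stat n m X, R_stat k n m X) * generator_ext h (frob_sq N m X)) \<partial>mat_lebesgue N m)
       = (\<integral>\<^sup>+ p. ennreal (F p * joint_density N n m k h p) \<partial>(lborel \<Otimes>\<^sub>M R_lebesgue k n m))"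
proof -
  let ?IV = "block_idx n m {0}" and ?IR = "block_idx n m {1..k}"
  interpret sigma_finite_measure "lborel_pi ?IR"
    by (rule lborel_prod.sigma_finite) (simp add: finite_block_idx)
  note [measurable] = h(1) F(1)[unfolded R_lebesgue_eq]
  have card_IV: "card ?IV = n 0 * m" by (simp add: card_block_idx)
  then have IV: "finite ?IV" "?IV \<noteq> {}"
    using blocks[of 0] by (auto simp: finite_block_idx)
  define \<Phi> where "\<Phi> u = (\<integral>\<^sup>+ z. ennreal (blocks_jacobian n m u {1..k} z
    * (F (u, z) * generator_ext h (u + u * blocks_odds n m {1..k} z))) \<partial>lborel_pi ?IR)" for u
  have \<Phi>_measurable: "\<Phi> \<in> borel_measurable borel"
    unfolding \<Phi>_def using nn_integral_shrunk_blocks_measurable[OF F(1) h(1)] unfolding R_lebesgue_eq .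
  define g where "g z = ennreal (F (R_sq n m z 0, shrink_blocks n m (R_sq n m z 0) {1..k} z)
    * generator_ext h (\<Sum>i\<le>k. R_sq n m z i))" for z
  have g_measurable: "g \<in> borel_measurable (lborel_pi (block_idx n m {..k}))"
  proof -
    have [measurable]: "(\<lambda>z. R_sq n m z i) \<in> borel_measurable (lborel_pi (block_idx n m {..k}))" if "i \<le> k" for i
      using that by (intro R_sq_measurable) auto
    from measurable_compose[OF V_R_stat_blocks_measurable F(1)] show ?thesis
      unfolding g_def by measurable
  qed
  have "(\<integral>\<^sup>+ X. ennreal (F (V_stat n m X, R_stat k n m X) * generator_ext h (frob_sq N m X)) \<partial>mat_lebesgue N m)
      = (\<integral>\<^sup>+ z. g z \<partial>lborel_pi (block_idx n m {..k}))"
    using nn_integral_to_blocks[OF g_measurable] unfolding N g_def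
    by (simp add: V_stat_to_blocks[of n m _ k] R_stat_to_blocks frob_sq_to_blocks)
  also have "\<dots> = (\<integral>\<^sup>+ x. \<integral>\<^sup>+ z. g (merge ?IV ?IR (x, z)) \<partial>lborel_pi ?IR \<partial>lborel_pi ?IV)"
    using g_measurable block_idx_disjoint[of "{0}" "{1..k}" n m] unfolding block_idx_atMost_split
    by (intro lborel_prod.product_nn_integral_fold) (auto simp: finite_block_idx)
  also have "\<dots> = (\<integral>\<^sup>+ x. \<Phi> (sqnorm ?IV x) \<partial>lborel_pi ?IV)"
  proof (intro nn_integral_cong_AE, rule AE_mp[OF AE_sqnorm_nonzero[OF IV]], intro AE_I2 impI)
    fix x assume "sqnorm ?IV x \<noteq> 0"
    then have "sqnorm ?IV x > 0" using sqnorm_nonneg[of ?IV x] by linarith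
    moreover have "\<And>i. i \<in> {1..k} \<Longrightarrow> 1 \<le> n i * m" using blocks by auto
    ultimately show "(\<integral>\<^sup>+ z. g (merge ?IV ?IR (x, z)) \<partial>lborel_pi ?IR) = \<Phi> (sqnorm ?IV x)"
      using nn_integral_shrink_blocks_given_block0[OF _ _ F(1)[unfolded R_lebesgue_eq] F(2) h]
      unfolding g_def \<Phi>_def R_sq_merge_block0 shrink_blocks_merge_block0 sum_R_sq_merge_block0
      by simp
  qed
  also have "\<dots> = (\<integral>\<^sup>+ u. ennreal (indicator {0<..} u * radial_const (n 0 * m) * u powr (real (n 0 * m) / 2 - 1))
      * \<Phi> u \<partial>lborel)"
    using nn_integral_radial[OF IV \<Phi>_measurable] by (simp add: card_IV)
  also have "\<dots> = (\<integral>\<^sup>+ u. \<integral>\<^sup>+ z. ennreal (F (u, z) * joint_density N n m k h (u, z)) \<partial>lborel_pi ?IR \<partial>lborel)"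
  proof (rule nn_integral_cong)
    fix u :: real
    define c where "c = indicator {0<..} u * radial_const (n 0 * m) * u powr (real (n 0 * m) / 2 - 1)"
    have c: "0 \<le> c" using radial_const_nonneg by (simp add: c_def)
    have "ennreal c * \<Phi> u = (\<integral>\<^sup>+ z. ennreal c * ennreal (blocks_jacobian n m u {1..k} z
        * (F (u, z) * generator_ext h (u + u * blocks_odds n m {1..k} z))) \<partial>lborel_pi ?IR)"
      unfolding \<Phi>_def by (rule nn_integral_cmult[symmetric]) measurable
    also have "\<dots> = (\<integral>\<^sup>+ z. ennreal (F (u, z) * joint_density N n m k h (u, z)) \<partial>lborel_pi ?IR)"
      by (intro nn_integral_cong, subst ennreal_mult'[symmetric, OF c])
        (simp only: c_def radial_factor_blocks_jacobian[OF N])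
    finally show "ennreal c * \<Phi> u = \<dots>" .
  qed
  also have "\<dots> = (\<integral>\<^sup>+ p. ennreal (F p * joint_density N n m k h p) \<partial>(lborel \<Otimes>\<^sub>M lborel_pi ?IR))"
  proof -
    note [measurable] = joint_density_measurable[OF h(1), of N n m k]
    have "(\<lambda>p. ennreal (F p * joint_density N n m k h p)) \<in> borel_measurable (lborel \<Otimes>\<^sub>M lborel_pi ?IR)"
      by measurable
    then show ?thesis by (rule nn_integral_fst)
  qed
  finally show ?thesis
    by (simp add: R_lebesgue_eq)
qed

lemma distr_eq_densityI:
  assumes T: "T \<in> measurable M N" and f: "f \<in> borel_measurable N"
    and eq: "\<And>A. A \<in> sets N \<Longrightarrow> (\<integral>\<^sup>+ x. indicator A (T x) \<partial>M) = (\<integral>\<^sup>+ y. f y * indicator A y \<partial>N)"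
  shows "distr M N T = density N f"
proof (rule measure_eqI)
  fix A assume "A \<in> sets (distr M N T)"
  then have A: "A \<in> sets N" by simp
  have "emeasure (distr M N T) A = (\<integral>\<^sup>+ x. indicator (T -` A \<inter> space M) x \<partial>M)"
    using A T by (simp add: emeasure_distr)
  also have "\<dots> = (\<integral>\<^sup>+ x. indicator A (T x) \<partial>M)"
    by (intro nn_integral_cong) (auto simp: indicator_def)
  finally show "emeasure (distr M N T) A = emeasure (density N f) A"
    using A f by (simp add: eq emeasure_density)
qed simp

theorem distr_V_R_stat:
  assumes blocks: "\<And>i. i \<le> k \<Longrightarrow> 1 \<le> n i * m" and N: "N = (\<Sum>i\<le>k. n i)"
    and h: "h \<in> borel_measurable (restrict_space borel {0..})" "\<And>t. t \<ge> 0 \<Longrightarrow> 0 \<le> h t"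
  shows "distr (spherical_dist N m h) (lborel \<Otimes>\<^sub>M R_lebesgue k n m) (\<lambda>X. (V_stat n m X, R_stat k n m X))
       = density (lborel \<Otimes>\<^sub>M R_lebesgue k n m) (\<lambda>p. ennreal (joint_density N n m k h p))"
proof (rule distr_eq_densityI)
  have h_ext: "generator_ext h \<in> borel_measurable borel" "\<And>t. 0 \<le> generator_ext h t"
    using h by (simp_all add: generator_ext_measurable generator_ext_def)
  have stats: "(\<lambda>X. (V_stat n m X, R_stat k n m X)) \<in> measurable (mat_lebesgue N m) (lborel \<Otimes>\<^sub>M R_lebesgue k n m)"
    using V_R_stat_measurable[of n m k] by (simp add: N)
  then show "(\<lambda>X. (V_stat n m X, R_stat k n m X)) \<in> measurable (spherical_dist N m h) (lborel \<Otimes>\<^sub>M R_lebesgue k n m)"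
    by (simp add: spherical_dist_def)
  show "(\<lambda>p. ennreal (joint_density N n m k h p)) \<in> borel_measurable (lborel \<Otimes>\<^sub>M R_lebesgue k n m)"
    using joint_density_measurable[OF h_ext(1)] by (simp add: R_lebesgue_eq)
  fix A :: "(real \<times> ((nat \<times> nat \<times> nat) \<Rightarrow> real)) set"
  assume A: "A \<in> sets (lborel \<Otimes>\<^sub>M R_lebesgue k n m)"
  have "(\<integral>\<^sup>+ X. indicator A (V_stat n m X, R_stat k n m X) \<partial>spherical_dist N m h)
      = (\<integral>\<^sup>+ X. ennreal (indicator A (V_stat n m X, R_stat k n m X) * generator_ext h (frob_sq N m X)) \<partial>mat_lebesgue N m)"
    unfolding spherical_dist_generator_ext
    using generator_ext_frob_sq_measurable[OF h_ext(1)] h_ext(2) measurable_compose[OF stats borel_measurable_indicator[OF A]]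
    by (subst nn_integral_density) (auto intro!: nn_integral_cong simp: indicator_def)
  also have "\<dots> = (\<integral>\<^sup>+ p. ennreal (indicator A p * joint_density N n m k h p) \<partial>(lborel \<Otimes>\<^sub>M R_lebesgue k n m))"
    using A by (intro nn_integral_V_R_stat[OF blocks N h_ext]) auto
  also have "\<dots> = (\<integral>\<^sup>+ p. ennreal (joint_density N n m k h p) * indicator A p \<partial>(lborel \<Otimes>\<^sub>M R_lebesgue k n m))"
    by (intro nn_integral_cong) (auto simp: indicator_def)
  finally show "(\<integral>\<^sup>+ X. indicator A (V_stat n m X, R_stat k n m X) \<partial>spherical_dist N m h)
      = (\<integral>\<^sup>+ p. ennreal (joint_density N n m k h p) * indicator A p \<partial>(lborel \<Otimes>\<^sub>M R_lebesgue k n m))" .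
qed

section \<open>Marginal density of the R_i\<close>

lemma nn_integral_generator_radial:
  assumes d: "N * m \<ge> 1"
    and h: "generator_ext h \<in> borel_measurable borel" "\<And>t. 0 \<le> generator_ext h t"
    and h_norm: "(\<integral>\<^sup>+ X. ennreal (h (frob_sq N m X)) \<partial>mat_lebesgue N m) = 1"
  shows "(\<integral>\<^sup>+ t. ennreal (indicator {0<..} t * t powr (real (N * m) / 2 - 1) * generator_ext h t) \<partial>lborel)
       = ennreal (1 / radial_const (N * m))"
proof -
  let ?I = "mat_idx N m"
  define Z where "Z = (\<integral>\<^sup>+ t. ennreal (indicator {0<..} t * t powr (real (N * m) / 2 - 1) * generator_ext h t) \<partial>lborel)"
  have card: "card ?I = N * m" by (simp add: mat_idx_def card_cartesian_product)
  then have I: "finite ?I" "?I \<noteq> {}" using d card_gt_0_iff[of ?I] by auto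
  have c: "radial_const (N * m) > 0" using d by (rule radial_const_pos)
  have "1 = (\<integral>\<^sup>+ X. ennreal (generator_ext h (sqnorm ?I X)) \<partial>lborel_pi ?I)"
    unfolding h_norm[symmetric] mat_lebesgue_def
    by (intro nn_integral_cong) (simp add: generator_ext_def frob_sq_def sqnorm_def max_absorb1 sum_nonneg)
  also have "\<dots> = (\<integral>\<^sup>+ t. ennreal (indicator {0<..} t * radial_const (N * m) * t powr (real (N * m) / 2 - 1))
      * ennreal (generator_ext h t) \<partial>lborel)"
    using nn_integral_radial[OF I, of "\<lambda>t. ennreal (generator_ext h t)"] h(1) by (simp add: card)
  also have "\<dots> = (\<integral>\<^sup>+ t. ennreal (radial_const (N * m))
      * ennreal (indicator {0<..} t * t powr (real (N * m) / 2 - 1) * generator_ext h t) \<partial>lborel)"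
    using c h(2) by (intro nn_integral_cong) (simp add: ennreal_mult'[symmetric] indicator_def)
  also have "\<dots> = ennreal (radial_const (N * m)) * Z"
    unfolding Z_def using h(1) by (intro nn_integral_cmult) measurable
  finally have normalized: "1 = ennreal (radial_const (N * m)) * Z" .
  have "ennreal (1 / radial_const (N * m)) * ennreal (radial_const (N * m)) = 1"
    using c by (simp flip: ennreal_mult)
  then have "Z = ennreal (1 / radial_const (N * m)) * (ennreal (radial_const (N * m)) * Z)"
    by (simp add: mult.assoc[symmetric])
  then have "Z = ennreal (1 / radial_const (N * m))"
    by (simp only: normalized[symmetric] mult_1_right)
  then show ?thesis by (simp only: Z_def)
qed

definition marginal_density :: "nat \<Rightarrow> (nat \<Rightarrow> nat) \<Rightarrow> nat \<Rightarrow> nat \<Rightarrow> ((nat \<times> nat \<times> nat) \<Rightarrow> real) \<Rightarrow> real" where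
  "marginal_density N n m k R = indicator {R. \<forall>i\<in>{1..k}. R_sq n m R i < 1} R
     * (Gamma (real (N * m) / 2) / (pi powr (real ((N - n 0) * m) / 2) * Gamma (real (n 0 * m) / 2))
        * (1 + (\<Sum>i=1..k. R_sq n m R i / (1 - R_sq n m R i))) powr (- (real (N * m) / 2))
        * (\<Prod>i=1..k. (1 - R_sq n m R i) powr (- (real (n i * m) / 2) - 1)))"

lemma nn_integral_dilated:
  assumes "c > 0" and "g \<in> borel_measurable borel"
  shows "(\<integral>\<^sup>+ v. ennreal (g (c * v)) \<partial>lborel) = ennreal (1 / c) * (\<integral>\<^sup>+ t. ennreal (g t) \<partial>lborel)"
  using nn_integral_real_affine[of "\<lambda>t. ennreal (g t)" c 0] assms
  by (simp add: mult.assoc[symmetric] ennreal_mult[symmetric])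

lemma nn_integral_joint_density_fst:
  assumes d: "1 \<le> n 0 * m" "n 0 \<le> N"
    and h: "generator_ext h \<in> borel_measurable borel" "\<And>t. 0 \<le> generator_ext h t"
    and h_norm: "(\<integral>\<^sup>+ X. ennreal (h (frob_sq N m X)) \<partial>mat_lebesgue N m) = 1"
  shows "(\<integral>\<^sup>+ v. ennreal (joint_density N n m k h (v, R)) \<partial>lborel) = ennreal (marginal_density N n m k R)"
proof (cases "\<forall>i\<in>{1..k}. R_sq n m R i < 1")
  case False
  then show ?thesis by (simp add: joint_density_def marginal_density_def)
next
  case True
  define a where "a = real (N * m) / 2"
  define c where "c = 1 + blocks_odds n m {1..k} R"
  define P where "P = (\<Prod>i\<in>{1..k}. (1 - R_sq n m R i) powr (- (real (n i * m) / 2) - 1))"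
  define K where "K = radial_const (n 0 * m) * P * c powr (1 - a)"
  define g where "g t = indicator {0<..} t * t powr (a - 1) * generator_ext h t" for t :: real
  have Nm: "1 \<le> N * m" using d by (metis le_trans mult_le_mono1)
  have "0 \<le> blocks_odds n m {1..k} R"
    unfolding blocks_odds_def using True by (intro sum_nonneg) (auto intro!: divide_nonneg_pos simp: R_sq_nonneg)
  then have c: "1 \<le> c" by (simp add: c_def)
  have K: "0 \<le> K" unfolding K_def P_def using radial_const_nonneg by (simp add: prod_nonneg)
  have g_measurable[measurable]: "g \<in> borel_measurable borel" unfolding g_def using h(1) by measurable
  have joint: "joint_density N n m k h (v, R) = K * g (c * v)" for v
  proof (cases "v > 0")
    case v: True
    have "c powr (1 - a) * (c * v) powr (a - 1) = v powr (a - 1)"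
      using c v by (simp add: powr_mult powr_add[symmetric])
    then show ?thesis
      using True v c unfolding joint_density_def K_def g_def
      by (simp add: P_def a_def c_def ac_simps)
  qed (use c in \<open>auto simp: joint_density_def g_def zero_less_mult_iff\<close>)
  have "(\<integral>\<^sup>+ v. ennreal (joint_density N n m k h (v, R)) \<partial>lborel)
      = ennreal K * (\<integral>\<^sup>+ v. ennreal (g (c * v)) \<partial>lborel)"
  proof -
    have "0 \<le> g t" for t using h(2) by (simp add: g_def indicator_def)
    then have "(\<integral>\<^sup>+ v. ennreal (K * g (c * v)) \<partial>lborel) = (\<integral>\<^sup>+ v. ennreal K * ennreal (g (c * v)) \<partial>lborel)"
      using K by (intro nn_integral_cong) (simp add: ennreal_mult)
    also have "\<dots> = ennreal K * (\<integral>\<^sup>+ v. ennreal (g (c * v)) \<partial>lborel)"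
      by (intro nn_integral_cmult) measurable
    finally show ?thesis unfolding joint .
  qed
  also have "\<dots> = ennreal K * (ennreal (1 / c) * (\<integral>\<^sup>+ t. ennreal (g t) \<partial>lborel))"
    using c by (simp add: nn_integral_dilated[OF _ g_measurable])
  also have "(\<integral>\<^sup>+ t. ennreal (g t) \<partial>lborel) = ennreal (1 / radial_const (N * m))"
    unfolding g_def a_def by (rule nn_integral_generator_radial[OF Nm h h_norm])
  finally have "(\<integral>\<^sup>+ v. ennreal (joint_density N n m k h (v, R)) \<partial>lborel)
      = ennreal K * (ennreal (1 / c) * ennreal (1 / radial_const (N * m)))" .
  also have "\<dots> = ennreal (K / c / radial_const (N * m))"
    using K c radial_const_pos[OF Nm] by (simp add: ennreal_mult[symmetric] field_simps)
  also have "K / c / radial_const (N * m) = marginal_density N n m k R"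
  proof -
    have pi_powr: "pi powr a = pi powr (real ((N - n 0) * m) / 2) * pi powr (real (n 0 * m) / 2)"
      using d by (simp add: a_def powr_add[symmetric] of_nat_diff left_diff_distrib add_divide_distrib[symmetric])
    have "c powr (1 - a) = c powr 1 * c powr (- a)"
      by (subst powr_add[symmetric]) simp
    then have c_powr: "c powr (1 - a) = c * c powr (- a)"
      using c by simp
    have Gamma: "Gamma a > 0" "Gamma (real (n 0 * m) / 2) > 0"
      using d Nm by (auto simp: a_def intro!: Gamma_real_pos)
    have "marginal_density N n m k R
        = Gamma a / (pi powr (real ((N - n 0) * m) / 2) * Gamma (real (n 0 * m) / 2)) * c powr (- a) * P"
      using True by (simp add: marginal_density_def a_def c_def P_def blocks_odds_def)
    then show ?thesis
      unfolding K_def radial_const_def c_powr a_def[symmetric] pi_powr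
      using c Gamma by (simp add: field_simps)
  qed
  finally show ?thesis .
qed

theorem distr_R_stat:
  assumes blocks: "\<And>i. i \<le> k \<Longrightarrow> 1 \<le> n i * m" and N: "N = (\<Sum>i\<le>k. n i)"
    and h: "h \<in> borel_measurable (restrict_space borel {0..})" "\<And>t. t \<ge> 0 \<Longrightarrow> 0 \<le> h t"
    and h_norm: "(\<integral>\<^sup>+ X. ennreal (h (frob_sq N m X)) \<partial>mat_lebesgue N m) = 1"
  shows "distr (spherical_dist N m h) (R_lebesgue k n m) (R_stat k n m)
       = density (R_lebesgue k n m) (\<lambda>R. ennreal (marginal_density N n m k R))"
proof -
  have h_ext: "generator_ext h \<in> borel_measurable borel" "\<And>t. 0 \<le> generator_ext h t"
    using h by (simp_all add: generator_ext_measurable generator_ext_def)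
  have "emeasure (spherical_dist N m h) (space (spherical_dist N m h)) = 1"
    using h_norm generator_ext_frob_sq_measurable[OF h_ext(1)] unfolding spherical_dist_generator_ext
    by (subst emeasure_density) (auto intro!: nn_integral_cong simp: generator_ext_frob_sq)
  then interpret prob_space "spherical_dist N m h" by (rule prob_spaceI)
  interpret R: sigma_finite_measure "R_lebesgue k n m"
    unfolding R_lebesgue_eq by (rule lborel_prod.sigma_finite) (simp add: finite_block_idx)
  have "distributed (spherical_dist N m h) (lborel \<Otimes>\<^sub>M R_lebesgue k n m) (\<lambda>X. (V_stat n m X, R_stat k n m X))
      (\<lambda>p. ennreal (joint_density N n m k h p))"
    unfolding distributed_def
    using distr_V_R_stat[OF blocks N h] V_R_stat_measurable[of n m k] joint_density_measurable[OF h_ext(1)]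
    by (simp add: N spherical_dist_def R_lebesgue_eq)
  from distr_marginal2[OF sigma_finite_lborel R.sigma_finite_measure_axioms this]
  have "distr (spherical_dist N m h) (R_lebesgue k n m) (R_stat k n m)
      = density (R_lebesgue k n m) (\<lambda>R. \<integral>\<^sup>+ v. ennreal (joint_density N n m k h (v, R)) \<partial>lborel)"
    by (simp add: distributed_def)
  also have "\<dots> = density (R_lebesgue k n m) (\<lambda>R. ennreal (marginal_density N n m k R))"
    using blocks[of 0] N h_ext h_norm
    by (simp add: nn_integral_joint_density_fst member_le_sum)
  finally show ?thesis .
qed

lemma joint_density_eq:
  "joint_density N n m k h (v, R)
     = indicator {(v, R). v > 0 \<and> (\<forall>i\<in>{1..k}. R_sq n m R i < 1)} (v, R)
       * (pi powr (real (n 0 * m) / 2) / Gamma (real (n 0 * m) / 2)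
          * v powr (real (N * m) / 2 - 1)
          * h (v * (1 + (\<Sum>i=1..k. R_sq n m R i / (1 - R_sq n m R i))))
          * (\<Prod>i=1..k. (1 - R_sq n m R i) powr (- (real (n i * m) / 2) - 1)))"
proof (cases "v > 0 \<and> (\<forall>i\<in>{1..k}. R_sq n m R i < 1)")
  case True
  then have "0 \<le> (\<Sum>i=1..k. R_sq n m R i / (1 - R_sq n m R i))"
    by (intro sum_nonneg) (auto intro!: divide_nonneg_pos simp: R_sq_nonneg)
  with True show ?thesis
    by (simp add: joint_density_def generator_ext_def radial_const_def blocks_odds_def)
qed (auto simp: joint_density_def)

lemma ennreal_joint_density:
  "(\<lambda>p. ennreal (joint_density N n m k h p))
     = (\<lambda>(v, R). ennreal (indicator {(v, R). v > 0 \<and> (\<forall>i\<in>{1..k}. R_sq n m R i < 1)} (v, R)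
          * (pi powr (real (n 0 * m) / 2) / Gamma (real (n 0 * m) / 2)
             * v powr (real (N * m) / 2 - 1)
             * h (v * (1 + (\<Sum>i=1..k. R_sq n m R i / (1 - R_sq n m R i))))
             * (\<Prod>i=1..k. (1 - R_sq n m R i) powr (- (real (n i * m) / 2) - 1)))))"
  unfolding fun_eq_iff by (simp only: split_paired_All case_prod_conv joint_density_eq simp_thms)

theorem theorem4:
  fixes h :: "real \<Rightarrow> real" and k m :: nat and n :: "nat \<Rightarrow> nat" and N :: nat
  assumes m_pos: "1 \<le> m"
    and n_ge: "\<forall>i\<le>k. m \<le> n i"
    and N_def: "N = (\<Sum>i\<le>k. n i)"
    and h_meas: "h \<in> borel_measurable (restrict_space borel {0..})"
    and h_nonneg: "\<forall>t\<ge>0. 0 \<le> h t"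
    and h_norm: "(\<integral>\<^sup>+ X. ennreal (h (frob_sq N m X)) \<partial>mat_lebesgue N m) = 1"
  shows
    "distr (spherical_dist N m h) (lborel \<Otimes>\<^sub>M R_lebesgue k n m) (\<lambda>X. (V_stat n m X, R_stat k n m X))
       = density (lborel \<Otimes>\<^sub>M R_lebesgue k n m)
           (\<lambda>(v, R). ennreal (indicator {(v, R). v > 0 \<and> (\<forall>i\<in>{1..k}. R_sq n m R i < 1)} (v, R)
              * (pi powr (real (n 0 * m) / 2) / Gamma (real (n 0 * m) / 2)
                 * v powr (real (N * m) / 2 - 1)
                 * h (v * (1 + (\<Sum>i=1..k. R_sq n m R i / (1 - R_sq n m R i))))
                 * (\<Prod>i=1..k. (1 - R_sq n m R i) powr (- (real (n i * m) / 2) - 1)))))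
     \<and> distr (spherical_dist N m h) (R_lebesgue k n m) (R_stat k n m)
       = density (R_lebesgue k n m)
           (\<lambda>R. ennreal (indicator {R. \<forall>i\<in>{1..k}. R_sq n m R i < 1} R
              * (Gamma (real (N * m) / 2)
                   / (pi powr (real ((N - n 0) * m) / 2) * Gamma (real (n 0 * m) / 2))
                 * (1 + (\<Sum>i=1..k. R_sq n m R i / (1 - R_sq n m R i))) powr (- (real (N * m) / 2))
                 * (\<Prod>i=1..k. (1 - R_sq n m R i) powr (- (real (n i * m) / 2) - 1)))))"
proof -
  have blocks: "1 \<le> n i * m" if "i \<le> k" for i
    using m_pos n_ge that by (metis le_trans mult_le_mono1 nat_mult_1)
  from h_nonneg have h_nonneg': "\<And>t. t \<ge> 0 \<Longrightarrow> 0 \<le> h t" by simp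
  show ?thesis
    using distr_V_R_stat[OF blocks N_def h_meas h_nonneg'] distr_R_stat[OF blocks N_def h_meas h_nonneg' h_norm]
    unfolding ennreal_joint_density marginal_density_def ..
qed

end
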